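(* Let $G=(V,E)$ be a connected input network and let $d\geq 1$ be an integer. There is a distributed algorithm running in $O(2^{2d})$ rounds in the CONGEST model that outputs either an elimination tree $T=(V,F)$ of $G$ of depth at most $2^d$, or reports that $\mathsf{td}(G)>d$. In the former case, at the end of the algorithm each node $u\in V$ knows its parent and its children in $T$, as well as the depth of $T$.
   Context: CONGEST model: synchronous rounds on a connected $n$-node network with unique $O(\log n)$-bit identifiers; in each round each node exchanges $O(\log n)$-bit messages with each neighbor and computes locally. An elimination tree of $G$ is a rooted tree on $V$ such that for every edge $\{u,v\}\in E$ one endpoint is an ancestor of the other; its depth is the number of vertices on a longest root-to-leaf path. $\mathsf{td}(G)$ (treedepth) is the minimum depth of an elimination forest of $G$. *)

theory Defs
  imports Main "HOL-Library.Discrete_Functions"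
begin

definition connected_graph :: "nat set \<Rightarrow> (nat \<Rightarrow> nat \<Rightarrow> bool) \<Rightarrow> bool" where
  "connected_graph V E \<longleftrightarrow> finite V \<and> V \<noteq> {} \<and>
     (\<forall>u v. E u v \<longrightarrow> u \<in> V \<and> v \<in> V \<and> E v u \<and> u \<noteq> v) \<and>
     (\<forall>u\<in>V. \<forall>v\<in>V. (u, v) \<in> {(x, y). E x y}\<^sup>*)"

definition parent_rel :: "nat set \<Rightarrow> (nat \<Rightarrow> nat option) \<Rightarrow> (nat \<times> nat) set" where
  "parent_rel V par = {(v, w). v \<in> V \<and> par v = Some w}"

definition ancestor :: "nat set \<Rightarrow> (nat \<Rightarrow> nat option) \<Rightarrow> nat \<Rightarrow> nat \<Rightarrow> bool" where
  "ancestor V par u v \<longleftrightarrow> (v, u) \<in> (parent_rel V par)\<^sup>+"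

text \<open>A rooted forest on V: parents lie in V and every vertex reaches a root
  (a vertex without parent); this excludes cycles.\<close>
definition rooted_forest :: "nat set \<Rightarrow> (nat \<Rightarrow> nat option) \<Rightarrow> bool" where
  "rooted_forest V par \<longleftrightarrow>
     (\<forall>v\<in>V. \<forall>w. par v = Some w \<longrightarrow> w \<in> V) \<and>
     (\<forall>v\<in>V. \<exists>r\<in>V. par r = None \<and> (v, r) \<in> (parent_rel V par)\<^sup>*)"

definition elimination_forest :: "nat set \<Rightarrow> (nat \<Rightarrow> nat \<Rightarrow> bool) \<Rightarrow> (nat \<Rightarrow> nat option) \<Rightarrow> bool" where
  "elimination_forest V E par \<longleftrightarrow> rooted_forest V par \<and>
     (\<forall>u v. E u v \<longrightarrow> ancestor V par u v \<or> ancestor V par v u)"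

definition elimination_tree :: "nat set \<Rightarrow> (nat \<Rightarrow> nat \<Rightarrow> bool) \<Rightarrow> (nat \<Rightarrow> nat option) \<Rightarrow> bool" where
  "elimination_tree V E par \<longleftrightarrow> elimination_forest V E par \<and>
     (\<exists>!r. r \<in> V \<and> par r = None)"

text \<open>Depth = number of vertices on a longest root-to-leaf path
  = max over v of the number of vertices on the path from v to its root.\<close>
definition forest_depth :: "nat set \<Rightarrow> (nat \<Rightarrow> nat option) \<Rightarrow> nat" where
  "forest_depth V par = Max ((\<lambda>v. card {w. (v, w) \<in> (parent_rel V par)\<^sup>*}) ` V)"

definition treedepth :: "nat set \<Rightarrow> (nat \<Rightarrow> nat \<Rightarrow> bool) \<Rightarrow> nat" where
  "treedepth V E = (LEAST k. \<exists>par. elimination_forest V E par \<and> forest_depth V par = k)"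

text \<open>An algorithm is given by: init (own id, set of neighbour ids) giving the
 initial local state; send (state, neighbour id) giving the bit string sent to
 that neighbour in the current round; step (state, received messages indexed by
 sender id) giving the next state. Local computation is unrestricted.\<close>

primrec run :: "(nat \<Rightarrow> nat set \<Rightarrow> 's) \<Rightarrow> ('s \<Rightarrow> nat \<Rightarrow> bool list) \<Rightarrow>
    ('s \<Rightarrow> (nat \<Rightarrow> bool list) \<Rightarrow> 's) \<Rightarrow> (nat \<Rightarrow> nat \<Rightarrow> bool) \<Rightarrow> nat \<Rightarrow> nat \<Rightarrow> 's" where
  "run init send step E 0 v = init v {u. E v u}"
| "run init send step E (Suc r) v =
     step (run init send step E r v)
           (\<lambda>u. if E u v then send (run init send step E r u) v else [])"

text \<open>Output of a node: either a report that td(G) > d, or its parent (None for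
 the root), its set of children, and the depth of T.\<close>
datatype td_output = Reject | TreeInfo "nat option" "nat set" nat

text \<open>Bandwidth: O(log n) bits, i.e. at most B * (floor(log2 n)+1) bits.\<close>
definition log_bits :: "nat \<Rightarrow> nat" where
  "log_bits n = floor_log (max 2 n) + 1"

end

theory Submission
  imports Defs "HOL-Library.Transitive_Closure_Table" "HOL-Library.Countable" "HOL-Library.Option_ord"
begin

text \<open>
Let \<open>N = 2^d\<close>. The algorithm runs \<open>N\<close> election phases of \<open>N + 1\<close> rounds each. In phase \<open>k\<close>
every connected component of the still unplaced vertices floods, for \<open>N\<close> rounds, the maximum
identifier among its candidates; the winner is placed at level \<open>k + 1\<close> as child of its anchor,
the vertex elected in the previous phase for the component it came from, and becomes the anchor
of the remaining vertices of its component. Every edge therefore ends up between a vertex and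
one of its ancestors, and the levels bound the depth by \<open>N\<close>.

If \<open>td(G) \<le> d\<close> then no simple path has \<open>N\<close> vertices: the vertex of a path highest in an optimal
elimination forest splits it into two shorter paths, so a path with \<open>2^j\<close> vertices contains a
vertex with \<open>j + 1\<close> of its ancestors on the path. Hence \<open>N\<close> flooding rounds reach
a whole component, all its vertices agree on the winner, and after \<open>N\<close> phases every vertex is
placed. A vertex that sees a disagreement or remains unplaced rejects; by the above this only
happens if \<open>td(G) > d\<close>, while a run without rejection always yields an elimination tree.
Finally the depth of the tree is computed by \<open>N\<close> or-floods of \<open>2N\<close> rounds, enough to cover the
graph since every vertex is at most \<open>N - 1\<close> tree edges below the root.
\<close>

section \<open>Walks and elimination forests\<close>

definition walk :: "(nat \<Rightarrow> nat \<Rightarrow> bool) \<Rightarrow> nat list \<Rightarrow> bool" where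
  "walk E ps \<longleftrightarrow> (\<forall>i. Suc i < length ps \<longrightarrow> E (ps!i) (ps!Suc i))"

lemma walk_take: "walk E ps \<Longrightarrow> walk E (take k ps)"
  by (auto simp: walk_def)

lemma walk_drop: "walk E ps \<Longrightarrow> walk E (drop k ps)"
  unfolding walk_def
proof (intro allI impI)
  fix i assume "\<forall>i. Suc i < length ps \<longrightarrow> E (ps ! i) (ps ! Suc i)" "Suc i < length (drop k ps)"
  then show "E (drop k ps ! i) (drop k ps ! Suc i)" by (auto dest: spec[of _ "k + i"])
qed

lemma walk_Cons: "walk E (a # b # ps) \<longleftrightarrow> E a b \<and> walk E (b # ps)"
  unfolding walk_def by (auto simp: nth_Cons split: nat.splits)

lemma single_valued_parent_rel: "single_valued (parent_rel V par)"
  by (auto simp: single_valued_def parent_rel_def)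

lemma walk_common_ancestor:
  assumes EF: "elimination_forest V E par"
  shows "walk E ps \<Longrightarrow> ps \<noteq> [] \<Longrightarrow> \<exists>z\<in>set ps. \<forall>y\<in>set ps. (y,z) \<in> (parent_rel V par)\<^sup>*"
proof (induction ps)
  case Nil then show ?case by simp
next
  case (Cons a qs)
  show ?case
  proof (cases qs)
    case Nil then show ?thesis by auto
  next
    case (Cons h qs')
    with Cons.prems have Eah: "E a h" and walk_qs: "walk E qs" by (auto simp: walk_Cons)
    from Cons.IH[OF walk_qs] Cons obtain z
      where z: "z \<in> set qs" "\<forall>y\<in>set qs. (y,z) \<in> (parent_rel V par)\<^sup>*" by auto
    have hz: "(h,z) \<in> (parent_rel V par)\<^sup>*" using z Cons by auto
    from EF Eah have "ancestor V par a h \<or> ancestor V par h a"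
      by (auto simp: elimination_forest_def)
    then show ?thesis
    proof
      assume "ancestor V par h a"
      then have "(a,z) \<in> (parent_rel V par)\<^sup>*" using hz by (auto simp: ancestor_def)
      then show ?thesis using z by auto
    next
      assume "ancestor V par a h"
      then have ha: "(h,a) \<in> (parent_rel V par)\<^sup>*" by (auto simp: ancestor_def)
      from single_valued_confluent[OF single_valued_parent_rel ha hz]
      show ?thesis
      proof
        assume "(a,z) \<in> (parent_rel V par)\<^sup>*" then show ?thesis using z by auto
      next
        assume "(z,a) \<in> (parent_rel V par)\<^sup>*"
        then have "\<forall>y\<in>set (a#qs). (y,a) \<in> (parent_rel V par)\<^sup>*"
          using z by (auto intro: rtrancl_trans)
        then show ?thesis by auto
      qed
    qed
  qed
qed

lemma parent_rel_rtrancl_in: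
  assumes "rooted_forest V par"
  shows "(y,w) \<in> (parent_rel V par)\<^sup>* \<Longrightarrow> w \<in> insert y V"
proof (induction rule: rtrancl_induct)
  case (step a b)
  then show ?case using assms by (auto simp: parent_rel_def rooted_forest_def)
qed simp

lemma finite_ancestors:
  assumes "rooted_forest V par" "finite V"
  shows "finite {w. (y,w) \<in> (parent_rel V par)\<^sup>*}"
  using parent_rel_rtrancl_in[OF assms(1)] assms(2)
  by (metis (no_types, lifting) finite_insert mem_Collect_eq rev_finite_subset subsetI)

lemma walk_ancestor_count:
  assumes EF: "elimination_forest V E par"
  shows "walk E ps \<Longrightarrow> distinct ps \<Longrightarrow> 2^j \<le> length ps \<Longrightarrow>
    \<exists>y\<in>set ps. j+1 \<le> card ({w. (y,w) \<in> (parent_rel V par)\<^sup>*} \<inter> set ps)"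
proof (induction j arbitrary: ps)
  case 0
  then obtain y where y: "y \<in> set ps" by (cases ps) auto
  then have "y \<in> {w. (y,w) \<in> (parent_rel V par)\<^sup>*} \<inter> set ps" by auto
  then have "card ({w. (y,w) \<in> (parent_rel V par)\<^sup>*} \<inter> set ps) \<ge> 1"
    by (metis One_nat_def card_0_eq empty_iff finite_Int finite_set less_one not_le)
  then show ?case using y by auto
next
  case (Suc j)
  have ne: "ps \<noteq> []" using Suc.prems by auto
  from walk_common_ancestor[OF EF Suc.prems(1) ne] obtain z
    where z: "z \<in> set ps" "\<forall>y\<in>set ps. (y,z) \<in> (parent_rel V par)\<^sup>*" by auto
  obtain i where i: "i < length ps" "ps ! i = z" using z by (auto simp: in_set_conv_nth)
  define L where "L = take i ps"
  define R where "R = drop (Suc i) ps"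
  have split: "ps = L @ z # R" unfolding L_def R_def using i id_take_nth_drop by metis
  have on_side: "\<exists>y\<in>set ps. Suc j + 1 \<le> card ({w. (y,w) \<in> (parent_rel V par)\<^sup>*} \<inter> set ps)"
    if ws: "walk E ws" "distinct ws" "set ws \<subseteq> set ps" "z \<notin> set ws" "2^j \<le> length ws" for ws
  proof -
    from Suc.IH[OF ws(1,2,5)] obtain y
      where y: "y \<in> set ws" "j+1 \<le> card ({w. (y,w) \<in> (parent_rel V par)\<^sup>*} \<inter> set ws)" by auto
    let ?anc = "{w. (y,w) \<in> (parent_rel V par)\<^sup>*}"
    have "(y,z) \<in> (parent_rel V par)\<^sup>*" using z y ws by auto
    then have "insert z (?anc \<inter> set ws) \<subseteq> ?anc \<inter> set ps" using z ws by auto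
    then have "card (insert z (?anc \<inter> set ws)) \<le> card (?anc \<inter> set ps)" by (intro card_mono) auto
    moreover have "card (insert z (?anc \<inter> set ws)) = Suc (card (?anc \<inter> set ws))" using ws(4) by simp
    ultimately show ?thesis using y ws by force
  qed
  have L: "distinct L" "z \<notin> set L" and R: "distinct R" "z \<notin> set R"
    using Suc.prems(2) split by auto
  have walks: "walk E L" "walk E R"
    unfolding L_def R_def using Suc.prems(1) by (simp_all add: walk_take walk_drop)
  have "length L + length R + 1 = length ps" using split by simp
  then have "2^j \<le> length L \<or> 2^j \<le> length R" using Suc.prems(3) by auto
  then show ?case using on_side[OF walks(1) L(1) _ L(2)] on_side[OF walks(2) R(1) _ R(2)] split
    by auto
qed

lemma walk_length_less_exp_depth:
  assumes EF: "elimination_forest V E par" and fin: "finite V"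
    and p: "walk E ps" "distinct ps" "set ps \<subseteq> V" and dep: "forest_depth V par \<le> d"
  shows "length ps < 2^d"
proof (rule ccontr)
  assume "\<not> length ps < 2^d"
  then have "2^d \<le> length ps" by simp
  from walk_ancestor_count[OF EF p(1,2) this] obtain y where y: "y \<in> set ps"
    "d+1 \<le> card ({w. (y,w) \<in> (parent_rel V par)\<^sup>*} \<inter> set ps)" by auto
  have RF: "rooted_forest V par" using EF by (simp add: elimination_forest_def)
  have "card ({w. (y,w) \<in> (parent_rel V par)\<^sup>*} \<inter> set ps) \<le> card {w. (y,w) \<in> (parent_rel V par)\<^sup>*}"
    by (intro card_mono finite_ancestors[OF RF fin]) auto
  also have "\<dots> \<le> forest_depth V par" unfolding forest_depth_def
    using y p(3) fin by (intro Max_ge) auto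
  finally show False using y dep by simp
qed

lemma elimination_forest_exists:
  assumes fin: "finite V" and ne: "V \<noteq> {}"
    and edge_in_V: "\<forall>u v. E u v \<longrightarrow> u \<in> V \<and> v \<in> V \<and> u \<noteq> v"
  shows "\<exists>par. elimination_forest V E par"
proof -
  define par where "par v = (if v = Min V then None else Some (Max {u\<in>V. u < v}))" for v
  have pred: "Max {u\<in>V. u < v} \<in> V \<and> u \<le> Max {u\<in>V. u < v} \<and> Max {u\<in>V. u < v} < v"
    if "u \<in> V" "u < v" for u v
  proof -
    have "finite {u\<in>V. u < v}" "u \<in> {u\<in>V. u < v}" using fin that by auto
    moreover from this have "Max {u\<in>V. u < v} \<in> {u\<in>V. u < v}" by (intro Max_in) auto
    ultimately show ?thesis using Max_ge by auto
  qed
  have min_less: "Min V < v" if "v \<in> V" "v \<noteq> Min V" for v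
    using fin that by (simp add: order.not_eq_order_implies_strict)
  have anc: "(v,u) \<in> (parent_rel V par)\<^sup>+" if "u \<in> V" "v \<in> V" "u < v" for u v
    using that
  proof (induction v rule: less_induct)
    case (less v)
    define p where "p = Max {u\<in>V. u < v}"
    have p: "p \<in> V" "u \<le> p" "p < v" using pred[OF less.prems(1,3)] by (simp_all add: p_def)
    have "v \<noteq> Min V" using less.prems fin by (metis Min_le leD)
    then have vp: "(v,p) \<in> parent_rel V par" using less.prems
      by (simp add: parent_rel_def par_def p_def)
    show ?case
    proof (cases "u = p")
      case False
      then have "(p,u) \<in> (parent_rel V par)\<^sup>+" using less.IH[OF p(3) less.prems(1) p(1)] p by auto
      then show ?thesis using vp by (meson trancl_into_trancl2)
    qed (use vp in auto)
  qed
  have "elimination_forest V E par"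
    unfolding elimination_forest_def rooted_forest_def
  proof (intro conjI ballI allI impI)
    fix v w assume "v \<in> V" "par v = Some w"
    then show "w \<in> V" using pred[of "Min V" v] min_less fin ne
      by (auto simp: par_def split: if_splits)
  next
    fix v assume v: "v \<in> V"
    have m: "Min V \<in> V" "par (Min V) = None" using fin ne by (auto simp: par_def)
    have "(v, Min V) \<in> (parent_rel V par)\<^sup>*"
      using anc[OF m(1) v] min_less[OF v] by (cases "v = Min V") auto
    then show "\<exists>r\<in>V. par r = None \<and> (v, r) \<in> (parent_rel V par)\<^sup>*" using m by auto
  next
    fix u v assume "E u v"
    then have "u \<in> V" "v \<in> V" "u \<noteq> v" using edge_in_V by auto
    then show "ancestor V par u v \<or> ancestor V par v u"
      unfolding ancestor_def using anc by (metis linorder_neqE_nat)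
  qed
  then show ?thesis by blast
qed

lemma treedepth_walk_length_less:
  assumes G: "connected_graph V E" and td: "treedepth V E \<le> d"
    and p: "walk E ps" "distinct ps" "set ps \<subseteq> V"
  shows "length ps < 2^d"
proof -
  have fin: "finite V" and ne: "V \<noteq> {}" and edges: "\<forall>u v. E u v \<longrightarrow> u \<in> V \<and> v \<in> V \<and> u \<noteq> v"
    using G by (auto simp: connected_graph_def)
  obtain p0 where "elimination_forest V E p0" using elimination_forest_exists[OF fin ne edges] by blast
  then have "\<exists>k par. elimination_forest V E par \<and> forest_depth V par = k" by blast
  from LeastI_ex[OF this] obtain par
    where "elimination_forest V E par" "forest_depth V par = treedepth V E"
    unfolding treedepth_def by blast
  with td show ?thesis using walk_length_less_exp_depth[OF _ fin p] by simp
qed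

section \<open>Relation powers and flooding\<close>

lemma relpow_mono: "(R::('a\<times>'a) set) \<subseteq> R' \<Longrightarrow> R ^^ n \<subseteq> R' ^^ n"
  by (induction n) (simp_all add: relcomp_mono)

lemma relpow_pad_loop: "(v,w) \<in> (X::('a\<times>'a) set) ^^ a \<Longrightarrow> (w,w) \<in> X \<Longrightarrow> (v,w) \<in> X ^^ (a + m)"
  by (induction m) (auto intro: relpow_Suc_I)

lemma relpow_sym: "(\<forall>a b. (a,b) \<in> X \<longrightarrow> (b,a) \<in> X) \<Longrightarrow> (v,w) \<in> (X::('a\<times>'a) set)^^n \<Longrightarrow> (w,v) \<in> X^^n"
proof (induction n arbitrary: v)
  case (Suc n)
  obtain u where "(v,u) \<in> X" "(u,w) \<in> X^^n" using relpow_Suc_D2[OF Suc.prems(2)] by blast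
  then show ?case using Suc by (meson relpow_Suc_I)
qed simp

lemma relpow_Id_on_Un_rtrancl: "(v,w) \<in> (Id_on A \<union> B) ^^ n \<Longrightarrow> (v,w) \<in> B\<^sup>*"
proof -
  assume "(v,w) \<in> (Id_on A \<union> B) ^^ n"
  then have "(v,w) \<in> (Id_on A \<union> B)\<^sup>*" by (rule relpow_imp_rtrancl)
  moreover have "(Id_on A \<union> B)\<^sup>* \<subseteq> B\<^sup>*" by (rule rtrancl_subset_rtrancl) auto
  ultimately show ?thesis by blast
qed

lemma relpow_Id_on_closed: "(v,w) \<in> (Id_on A \<union> B)^^n \<Longrightarrow> B \<subseteq> A \<times> A \<Longrightarrow> v \<in> A \<Longrightarrow> w \<in> A"
proof (induction n arbitrary: w)
  case (Suc n)
  from relpow_Suc_E[OF Suc.prems(1)] obtain y where "(v,y) \<in> (Id_on A \<union> B)^^n" "(y,w) \<in> Id_on A \<union> B"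
    by blast
  then show ?case using Suc by auto
qed simp

lemma rtrancl_path_relpow: "rtrancl_path r v xs w \<Longrightarrow> (v,w) \<in> {(a,b). r a b}^^(length xs)"
proof (induction rule: rtrancl_path.induct)
  case (step x y ys z)
  have "(x,y) \<in> {(a,b). r a b}" using step(1) by simp
  from relpow_Suc_I2[OF this step(3)] show ?case by simp
qed simp

lemma rtrancl_path_walk: "rtrancl_path r v xs w \<Longrightarrow> (\<forall>a b. r a b \<longrightarrow> E a b) \<Longrightarrow> walk E (v # xs)"
proof (induction rule: rtrancl_path.induct)
  case (base x) then show ?case by (simp add: walk_def)
next
  case (step x y ys z)
  then show ?case by (simp add: walk_Cons)
qed

lemma rtrancl_path_set: "rtrancl_path r v xs w \<Longrightarrow> v \<in> A \<Longrightarrow> (\<forall>a b. r a b \<longrightarrow> b \<in> A) \<Longrightarrow> set (v # xs) \<subseteq> A"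
  by (induction rule: rtrancl_path.induct) auto

lemma max_flooding:
  fixes x :: "nat \<Rightarrow> 'v \<Rightarrow> 'a::linorder" and Rl :: "('v \<times> 'v) set"
  assumes x0: "\<forall>v\<in>U. x 0 v = c v"
    and mono: "\<forall>j<L. \<forall>v\<in>U. x j v \<le> x (Suc j) v"
    and nbr: "\<forall>j<L. \<forall>v\<in>U. \<forall>u. (v,u) \<in> Rl \<longrightarrow> x j u \<le> x (Suc j) v"
    and pick: "\<forall>j<L. \<forall>v\<in>U. x (Suc j) v = x j v \<or> (\<exists>u. (v,u) \<in> Rl \<and> x (Suc j) v = x j u)"
    and RlU: "Rl \<subseteq> U \<times> U"
  shows "j \<le> L \<Longrightarrow> v \<in> U \<Longrightarrow> (\<forall>w. (v,w) \<in> (Id_on U \<union> Rl)^^j \<longrightarrow> c w \<le> x j v) \<and>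
      (\<exists>w. (v,w) \<in> (Id_on U \<union> Rl)^^j \<and> x j v = c w)"
proof (induction j arbitrary: v)
  case 0 then show ?case using x0 by auto
next
  case (Suc j)
  have jl: "j < L" using Suc.prems by simp
  have A: "c w \<le> x (Suc j) v" if w: "(v,w) \<in> (Id_on U \<union> Rl)^^Suc j" for w
  proof -
    obtain u where u: "(v,u) \<in> Id_on U \<union> Rl" "(u,w) \<in> (Id_on U \<union> Rl)^^j"
      using relpow_Suc_D2[OF w] by blast
    show ?thesis
    proof (cases "(v,u) \<in> Rl")
      case True
      then have "u \<in> U" using RlU by auto
      then have "c w \<le> x j u" using Suc.IH[of u] jl u by auto
      also have "\<dots> \<le> x (Suc j) v" using nbr jl Suc.prems True by auto
      finally show ?thesis .
    next
      case False
      then have "u = v" using u by auto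
      then have "c w \<le> x j v" using Suc.IH[of v] jl u Suc.prems by auto
      also have "\<dots> \<le> x (Suc j) v" using mono jl Suc.prems by auto
      finally show ?thesis .
    qed
  qed
  have B: "\<exists>w. (v,w) \<in> (Id_on U \<union> Rl)^^Suc j \<and> x (Suc j) v = c w"
  proof -
    from pick jl Suc.prems
    consider "x (Suc j) v = x j v" | u where "(v,u) \<in> Rl" "x (Suc j) v = x j u" by blast
    then show ?thesis
    proof cases
      case 1
      obtain w where "(v,w) \<in> (Id_on U \<union> Rl)^^j" "x j v = c w" using Suc.IH[of v] jl Suc.prems
        by auto
      moreover have "(v,v) \<in> Id_on U \<union> Rl" using Suc.prems by auto
      ultimately show ?thesis using 1 by (metis relpow_Suc_I2)
    next
      case 2
      then have "u \<in> U" using RlU by auto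
      then obtain w where "(u,w) \<in> (Id_on U \<union> Rl)^^j" "x j u = c w" using Suc.IH[of u] jl by auto
      moreover have "(v,u) \<in> Id_on U \<union> Rl" using 2 by auto
      ultimately show ?thesis using 2 by (metis relpow_Suc_I2)
    qed
  qed
  show ?case using A B by blast
qed

section \<open>Binary encodings\<close>

fun bits_of_nat :: "nat \<Rightarrow> bool list" where
  "bits_of_nat n = (if n = 0 then [] else odd n # bits_of_nat (n div 2))"

declare bits_of_nat.simps[simp del]

fun nat_of_bits :: "bool list \<Rightarrow> nat" where
  "nat_of_bits [] = 0"
| "nat_of_bits (b # bs) = (if b then 1 else 0) + 2 * nat_of_bits bs"

lemma nat_of_bits_of_nat: "nat_of_bits (bits_of_nat n) = n"
proof (induction n rule: less_induct)
  case (less n)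
  show ?case
  proof (cases "n = 0")
    case True then show ?thesis by (simp add: bits_of_nat.simps)
  next
    case False
    then have "nat_of_bits (bits_of_nat n) =
      (if odd n then 1 else 0) + 2 * nat_of_bits (bits_of_nat (n div 2))"
      by (simp add: bits_of_nat.simps)
    also have "nat_of_bits (bits_of_nat (n div 2)) = n div 2" using less False by simp
    finally show ?thesis by presburger
  qed
qed

lemma length_bits_of_nat: "n < 2^k \<Longrightarrow> length (bits_of_nat n) \<le> k"
proof (induction k arbitrary: n)
  case 0 then show ?case by (simp add: bits_of_nat.simps)
next
  case (Suc k)
  show ?case
  proof (cases "n = 0")
    case True then show ?thesis by (simp add: bits_of_nat.simps)
  next
    case False
    have "n div 2 < 2^k" using Suc.prems by auto
    then show ?thesis using Suc.IH False by (simp add: bits_of_nat.simps)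
  qed
qed

fun encode_option :: "nat option \<Rightarrow> bool list" where
  "encode_option None = [False]"
| "encode_option (Some x) = True # bits_of_nat x"

fun decode_option :: "bool list \<Rightarrow> nat option" where
  "decode_option [] = None"
| "decode_option (b # bs) = (if b then Some (nat_of_bits bs) else None)"

lemma decode_encode_option[simp]: "decode_option (encode_option oo) = oo"
  by (cases oo) (auto simp: nat_of_bits_of_nat)

lemma less_exp_log_bits:
  assumes "x < (max 2 n) ^ c"
  shows "x < 2 ^ (c * log_bits n)"
proof -
  have "max 2 n < 2 ^ log_bits n" unfolding log_bits_def
    using floor_log_exp2_gt[of "max 2 n"] by simp
  then have "(max 2 n) ^ c \<le> (2 ^ log_bits n) ^ c" by (intro power_mono) auto
  also have "\<dots> = 2 ^ (c * log_bits n)" by (simp add: power_mult[symmetric] mult.commute)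
  finally show ?thesis using assms by simp
qed

lemma log_bits_ge_1: "1 \<le> log_bits n" by (simp add: log_bits_def)

lemma length_encode_option:
  assumes "\<forall>x. oo = Some x \<longrightarrow> x < (max 2 n) ^ c"
  shows "length (encode_option oo) \<le> (c+1) * log_bits n"
proof (cases oo)
  case None then show ?thesis using log_bits_ge_1[of n] by simp
next
  case (Some x)
  then have "length (bits_of_nat x) \<le> c * log_bits n"
    using assms less_exp_log_bits length_bits_of_nat by blast
  then show ?thesis using Some log_bits_ge_1[of n] by simp
qed

section \<open>The algorithm\<close>

record node_state =
  ident :: nat
  nbrs :: "nat list"
  clock :: nat
  rejected :: bool
  placed :: bool
  level :: nat
  parent :: "nat option"
  anchor :: "nat option"
  best :: "nat option"
  children :: "nat list"
  depth :: nat
  beacon :: bool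

definition encode_state :: "node_state \<Rightarrow> nat list" where
  "encode_state s =
    [to_nat (ident s, nbrs s, clock s, rejected s, placed s, level s, parent s, anchor s, best s,
      children s, depth s, beacon s)]"

definition decode_state :: "nat list \<Rightarrow> node_state" where
  "decode_state l =
    (case from_nat (hd l) :: nat \<times> nat list \<times> nat \<times> bool \<times> bool \<times> nat \<times> nat option \<times>
        nat option \<times> nat option \<times> nat list \<times> nat \<times> bool of
      (a1, a2, a3, a4, a5, a6, a7, a8, a9, a10, a11, a12) \<Rightarrow>
        \<lparr>ident = a1, nbrs = a2, clock = a3, rejected = a4, placed = a5, level = a6,
          parent = a7, anchor = a8, best = a9, children = a10, depth = a11, beacon = a12\<rparr>)"

lemma decode_encode_state[simp]: "decode_state (encode_state s) = s"
  by (cases s) (simp add: encode_state_def decode_state_def)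

text \<open>Only neighbours of the anchor stand for election. This makes every tree edge an edge of the
network, so children learn their parents by one message and the tree bounds the diameter.\<close>

definition candidate :: "node_state \<Rightarrow> nat option" where
  "candidate s = (if placed s then None else case anchor s of None \<Rightarrow> Some (ident s)
      | Some a \<Rightarrow> if a \<in> set (nbrs s) then Some (ident s) else None)"

definition elect_msg :: "nat \<Rightarrow> node_state \<Rightarrow> nat option" where
  "elect_msg N s = (if placed s then None else
    if clock s mod Suc N = 0 then candidate s else best s)"

definition election_rounds :: "nat \<Rightarrow> nat" where "election_rounds N = N * Suc N"

definition depth_msg :: "nat \<Rightarrow> node_state \<Rightarrow> bool" where
  "depth_msg N s = (let i = clock s - Suc (election_rounds N) in
     if i mod (2*N) = 0 then Suc (i div (2*N)) \<le> level s else beacon s)"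

text \<open>
With parameter \<open>N\<close>, rounds \<open>r < N (N + 1)\<close> form \<open>N\<close> election phases of \<open>N + 1\<close> rounds. In the
first \<open>N\<close> rounds of a phase the unplaced vertices flood the maximal candidate through \<open>best\<close>; in
the last one the vertex whose identifier won places itself below its anchor, the others adopt
the winner as their anchor, and a vertex that holds no value or sees a different one at a
neighbour sets \<open>rejected\<close>. In round \<open>N (N + 1)\<close> placed vertices announce their parents, so that
every vertex learns its children, and unplaced vertices reject. The following \<open>N\<close> blocks of \<open>2N\<close>
rounds compute the depth: in block \<open>q\<close> the vertices of level above \<open>q\<close> start an or-flood of
\<open>beacon\<close>, and a vertex reached by it sets \<open>depth\<close> to \<open>q + 1\<close>.
\<close>

definition td_init :: "nat \<Rightarrow> nat set \<Rightarrow> node_state" where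
  "td_init v ns = \<lparr>ident = v, nbrs = sorted_list_of_set ns, clock = 0, rejected = False,
     placed = False, level = 0, parent = None, anchor = None, best = None, children = [],
     depth = 0, beacon = False\<rparr>"

definition td_send :: "nat \<Rightarrow> node_state \<Rightarrow> nat \<Rightarrow> bool list" where
  "td_send N s u = (if clock s < election_rounds N then encode_option (elect_msg N s)
     else if clock s = election_rounds N then encode_option (if placed s then parent s else None)
     else if clock s \<le> election_rounds N + N * (2*N) then [depth_msg N s] else [])"

definition td_step :: "nat \<Rightarrow> node_state \<Rightarrow> (nat \<Rightarrow> bool list) \<Rightarrow> node_state" where
  "td_step N s m = (let r = clock s; s' = s\<lparr>clock := Suc r\<rparr> in
     if r < election_rounds N then
       (if placed s then s'
        else if r mod Suc N < N then
          s'\<lparr>best := Max (insert (elect_msg N s) ((\<lambda>u. decode_option (m u)) ` set (nbrs s)))\<rparr>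
        else
          (let bad = (best s = None \<or>
              (\<exists>u\<in>set (nbrs s). decode_option (m u) \<noteq> None \<and> decode_option (m u) \<noteq> best s)) in
           if best s = Some (ident s)
           then s'\<lparr>rejected := (rejected s \<or> bad), placed := True, level := Suc (r div Suc N),
             parent := anchor s\<rparr>
           else s'\<lparr>rejected := (rejected s \<or> bad), anchor := best s\<rparr>))
     else if r = election_rounds N then
       s'\<lparr>rejected := (rejected s \<or> \<not> placed s),
         children := filter (\<lambda>u. decode_option (m u) = Some (ident s)) (nbrs s)\<rparr>
     else if r \<le> election_rounds N + N * (2*N) then
       (let i = r - Suc (election_rounds N); b = (depth_msg N s \<or> (\<exists>u\<in>set (nbrs s). m u = [True])) in
        if Suc (i mod (2*N)) = 2*N
        then s'\<lparr>beacon := b, depth := (if b then Suc (i div (2*N)) else depth s)\<rparr>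
        else s'\<lparr>beacon := b\<rparr>)
     else s')"

definition td_out :: "node_state \<Rightarrow> td_output" where
  "td_out s = (if rejected s then Reject else TreeInfo (parent s) (set (children s)) (depth s))"

lemma td_step_simps[simp]:
  "ident (td_step N s m) = ident s" "nbrs (td_step N s m) = nbrs s"
  "clock (td_step N s m) = Suc (clock s)"
  by (auto simp: td_step_def Let_def)

lemma td_step_rejected: "rejected s \<Longrightarrow> rejected (td_step N s m)"
  by (auto simp: td_step_def Let_def)

definition congest_init :: "nat \<Rightarrow> nat set \<Rightarrow> nat list" where
  "congest_init v ns = encode_state (td_init v ns)"

definition congest_send :: "nat \<Rightarrow> nat list \<Rightarrow> nat \<Rightarrow> bool list" where
  "congest_send d s u = td_send (2^d) (decode_state s) u"

definition congest_step :: "nat \<Rightarrow> nat list \<Rightarrow> (nat \<Rightarrow> bool list) \<Rightarrow> nat list" where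
  "congest_step d s m = encode_state (td_step (2^d) (decode_state s) m)"

definition congest_out :: "nat list \<Rightarrow> td_output" where
  "congest_out s = td_out (decode_state s)"

lemma run_encode:
  assumes "\<And>s. dec (enc s) = s"
  shows "run (\<lambda>v ns. enc (init v ns)) (\<lambda>s u. send (dec s) u) (\<lambda>s m. enc (step (dec s) m)) E r v
    = enc (run init send step E r v)"
proof (induction r arbitrary: v)
  case (Suc r)
  show ?case by (simp only: run.simps Suc.IH assms)
qed simp

lemma run_congest:
  "run congest_init (congest_send d) (congest_step d) E r v
   = encode_state (run td_init (td_send (2^d)) (td_step (2^d)) E r v)"
  unfolding congest_init_def[abs_def] congest_send_def[abs_def] congest_step_def[abs_def]
  by (rule run_encode) simp

declare run.simps(2)[simp del]

locale td_run =
  fixes V :: "nat set" and E :: "nat \<Rightarrow> nat \<Rightarrow> bool" and N :: nat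
  assumes graph_connected: "connected_graph V E" and N_ge_2: "2 \<le> N"
begin

abbreviation state where "state \<equiv> run td_init (td_send N) (td_step N) E"

definition inbox where "inbox r v = (\<lambda>u. if E u v then td_send N (state r u) v else [])"

lemma finite_V: "finite V" and V_nonempty: "V \<noteq> {}"
  using graph_connected by (auto simp: connected_graph_def)

lemma edge_in_V: "E u v \<Longrightarrow> u \<in> V \<and> v \<in> V \<and> E v u \<and> u \<noteq> v"
  using graph_connected by (auto simp: connected_graph_def)

lemma finite_nbrs: "finite {u. E v u}"
  using finite_V edge_in_V by (metis (no_types, lifting) mem_Collect_eq rev_finite_subset subsetI)

lemma state_Suc: "state (Suc r) v = td_step N (state r v) (inbox r v)"
  by (simp add: inbox_def run.simps(2))

lemma state_ident_clock[simp]: "ident (state r v) = v \<and> clock (state r v) = r"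
  by (induction r) (simp add: td_init_def, simp add: state_Suc)

lemma state_nbrs: "nbrs (state r v) = sorted_list_of_set {u. E v u}"
  by (induction r) (simp add: td_init_def, simp add: state_Suc)

lemma set_state_nbrs[simp]: "set (nbrs (state r v)) = {u. E v u}"
  using finite_nbrs by (simp add: state_nbrs)

lemma inbox_from_nbr: "E v u \<Longrightarrow> inbox r v u = td_send N (state r u) v"
  using edge_in_V by (auto simp: inbox_def)

lemma round_cases:
  obtains (placed_vertex) "r < election_rounds N" "placed (state r v)"
  | (flooding) "r < election_rounds N" "\<not> placed (state r v)" "r mod Suc N < N"
  | (electing) "r < election_rounds N" "\<not> placed (state r v)" "r mod Suc N = N"
  | (handshake) "r = election_rounds N"
  | (counting) "election_rounds N < r" "r \<le> election_rounds N + N * (2*N)"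
  | (idle) "election_rounds N + N * (2*N) < r"
  by (metis less_Suc_eq linorder_neqE_nat mod_less_divisor not_le zero_less_Suc)

lemma state_Suc_placed:
  "r < election_rounds N \<Longrightarrow> placed (state r v) \<Longrightarrow> state (Suc r) v = (state r v)\<lparr>clock := Suc r\<rparr>"
  by (simp add: state_Suc td_step_def)

lemma state_Suc_flood: "r < election_rounds N \<Longrightarrow> \<not> placed (state r v) \<Longrightarrow> r mod Suc N < N \<Longrightarrow>
  state (Suc r) v = (state r v)\<lparr>clock := Suc r,
    best := Max (insert (elect_msg N (state r v)) ((\<lambda>u. elect_msg N (state r u)) ` {u. E v u}))\<rparr>"
proof -
  assume a: "r < election_rounds N" "\<not> placed (state r v)" "r mod Suc N < N"
  have "(\<lambda>u. decode_option (inbox r v u)) ` {u. E v u} = (\<lambda>u. elect_msg N (state r u)) ` {u. E v u}"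
    using a by (auto simp: inbox_from_nbr td_send_def)
  then show ?thesis using a by (simp add: state_Suc td_step_def Let_def)
qed

definition election_failed where "election_failed r v \<longleftrightarrow> best (state r v) = None \<or>
  (\<exists>u. E v u \<and> elect_msg N (state r u) \<noteq> None \<and> elect_msg N (state r u) \<noteq> best (state r v))"

lemma state_Suc_elect:
  assumes "r < election_rounds N" "\<not> placed (state r v)" "r mod Suc N = N"
  shows "state (Suc r) v = (if best (state r v) = Some v
    then (state r v)\<lparr>clock := Suc r, rejected := rejected (state r v) \<or> election_failed r v, placed := True,
      level := Suc (r div Suc N), parent := anchor (state r v)\<rparr>
    else (state r v)\<lparr>clock := Suc r, rejected := rejected (state r v) \<or> election_failed r v,
      anchor := best (state r v)\<rparr>)"
proof -
  have "(\<exists>u\<in>set (nbrs (state r v)).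
      decode_option (inbox r v u) \<noteq> None \<and> decode_option (inbox r v u) \<noteq> best (state r v)) =
    (\<exists>u. E v u \<and> elect_msg N (state r u) \<noteq> None \<and> elect_msg N (state r u) \<noteq> best (state r v))"
    using assms by (auto simp: inbox_from_nbr td_send_def)
  then show ?thesis using assms by (simp add: state_Suc td_step_def Let_def election_failed_def)
qed

lemma state_Suc_handshake: "r = election_rounds N \<Longrightarrow>
  state (Suc r) v = (state r v)\<lparr>clock := Suc r, rejected := (rejected (state r v) \<or> \<not> placed (state r v)),
    children := filter (\<lambda>u. (if placed (state r u) then parent (state r u) else None) = Some v)
      (nbrs (state r v))\<rparr>"
proof -
  assume a: "r = election_rounds N"
  have "filter (\<lambda>u. decode_option (inbox r v u) = Some (ident (state r v))) (nbrs (state r v)) =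
      filter (\<lambda>u. (if placed (state r u) then parent (state r u) else None) = Some v) (nbrs (state r v))"
    using a by (intro filter_cong) (auto simp: inbox_from_nbr td_send_def)
  then show ?thesis using a by (simp add: state_Suc td_step_def Let_def)
qed

lemma state_Suc_count: "election_rounds N < r \<Longrightarrow> r \<le> election_rounds N + N * (2*N) \<Longrightarrow>
  state (Suc r) v =
    (let i = r - Suc (election_rounds N);
         b = depth_msg N (state r v) \<or> (\<exists>u. E v u \<and> depth_msg N (state r u)) in
     if Suc (i mod (2*N)) = 2*N
     then (state r v)\<lparr>clock := Suc r, beacon := b, depth := (if b then Suc (i div (2*N)) else depth (state r v))\<rparr>
     else (state r v)\<lparr>clock := Suc r, beacon := b\<rparr>)"
proof -
  assume a: "election_rounds N < r" "r \<le> election_rounds N + N * (2*N)"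
  have "(\<exists>u\<in>set (nbrs (state r v)). inbox r v u = [True]) = (\<exists>u. E v u \<and> depth_msg N (state r u))"
    using a by (auto simp: inbox_from_nbr td_send_def)
  then show ?thesis using a by (simp add: state_Suc td_step_def Let_def)
qed

lemma state_Suc_idle:
  "election_rounds N + N * (2*N) < r \<Longrightarrow> state (Suc r) v = (state r v)\<lparr>clock := Suc r\<rparr>"
  by (simp add: state_Suc td_step_def Let_def)

definition ids_in_V where "ids_in_V s \<longleftrightarrow> (\<forall>x. best s = Some x \<longrightarrow> x \<in> V) \<and>
  (\<forall>x. anchor s = Some x \<longrightarrow> x \<in> V) \<and> (\<forall>x. parent s = Some x \<longrightarrow> x \<in> V)"

lemma elect_msg_in_V: "v \<in> V \<Longrightarrow> ids_in_V (state r v) \<Longrightarrow> elect_msg N (state r v) = Some x \<Longrightarrow> x \<in> V"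
  by (auto simp: elect_msg_def candidate_def ids_in_V_def split: if_splits option.splits)

lemma state_ids_in_V: "v \<in> V \<Longrightarrow> ids_in_V (state r v)"
proof (induction r arbitrary: v)
  case 0 then show ?case by (simp add: ids_in_V_def td_init_def)
next
  case (Suc r)
  have IH: "\<And>u. u \<in> V \<Longrightarrow> ids_in_V (state r u)" using Suc.IH .
  from round_cases[of r v] show ?case
  proof cases
    case placed_vertex then show ?thesis using state_Suc_placed[OF placed_vertex] IH[OF Suc.prems]
      by (simp add: ids_in_V_def)
  next
    case flooding
    let ?A = "insert (elect_msg N (state r v)) ((\<lambda>u. elect_msg N (state r u)) ` {u. E v u})"
    have "finite ?A" using finite_nbrs by simp
    then have "Max ?A \<in> ?A" by (intro Max_in) auto
    then have "\<forall>x. Max ?A = Some x \<longrightarrow> x \<in> V"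
      using elect_msg_in_V[OF Suc.prems IH[OF Suc.prems]] elect_msg_in_V IH edge_in_V by fastforce
    then show ?thesis using state_Suc_flood[OF flooding] IH[OF Suc.prems] by (simp add: ids_in_V_def)
  next
    case electing then show ?thesis using state_Suc_elect[OF electing] IH[OF Suc.prems]
      by (simp add: ids_in_V_def Let_def)
  next
    case handshake then show ?thesis using state_Suc_handshake[OF handshake] IH[OF Suc.prems]
      by (simp add: ids_in_V_def)
  next
    case counting then show ?thesis using state_Suc_count[OF counting] IH[OF Suc.prems]
      by (simp add: ids_in_V_def Let_def)
  next
    case idle then show ?thesis using state_Suc_idle[OF idle] IH[OF Suc.prems] by (simp add: ids_in_V_def)
  qed
qed

lemma td_send_length:
  assumes sub: "V \<subseteq> {..< (max 2 (card V)) ^ c}" and uv: "E u v"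
  shows "length (td_send N (state r u) v) \<le> (c+1) * log_bits (card V)"
proof -
  have u: "u \<in> V" using edge_in_V[OF uv] by auto
  have bnd: "\<And>x. x \<in> V \<Longrightarrow> x < (max 2 (card V)) ^ c" using sub by auto
  have e: "\<forall>x. elect_msg N (state r u) = Some x \<longrightarrow> x < (max 2 (card V)) ^ c"
    using elect_msg_in_V[OF u state_ids_in_V[OF u]] bnd by blast
  have p: "\<forall>x. (if placed (state r u) then parent (state r u) else None) = Some x \<longrightarrow>
    x < (max 2 (card V)) ^ c"
    using state_ids_in_V[OF u] bnd by (auto simp: ids_in_V_def)
  note def = td_send_def[of N "state r u" v]
  show ?thesis
    using length_encode_option[OF e] length_encode_option[OF p] log_bits_ge_1[of "card V"]
    by (simp only: def split: if_split) (auto simp del: encode_option.simps)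
qed

section \<open>Election phases\<close>

definition frozen where "frozen s s' \<longleftrightarrow> placed s' = placed s \<and> level s' = level s \<and>
  parent s' = parent s \<and> anchor s' = anchor s \<and> rejected s' = rejected s \<and>
  children s' = children s \<and> depth s' = depth s"

lemma phase_round_less: "k < N \<Longrightarrow> j \<le> N \<Longrightarrow> k * Suc N + j < election_rounds N"
proof -
  assume "k < N" "j \<le> N"
  then have "k * Suc N + j < Suc k * Suc N" by simp
  also have "\<dots> \<le> N * Suc N" using \<open>k < N\<close> by (intro mult_le_mono1) simp
  finally show ?thesis by (simp add: election_rounds_def)
qed

lemma phase_round_mod: "j \<le> N \<Longrightarrow> (k * Suc N + j) mod Suc N = j"
  by (metis add.commute mod_less mod_mult_self1 le_imp_less_Suc)

lemma phase_round_div: "j \<le> N \<Longrightarrow> (k * Suc N + j) div Suc N = k"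
  by (metis add.commute div_less div_mult_self1 le_imp_less_Suc add_0 nat.distinct(1))

lemma phase_frozen:
  assumes k: "k < N"
  shows "j \<le> N \<Longrightarrow> frozen (state (k * Suc N) v) (state (k * Suc N + j) v)"
proof (induction j)
  case 0 then show ?case by (simp add: frozen_def)
next
  case (Suc j)
  have r: "k * Suc N + j < election_rounds N" "(k * Suc N + j) mod Suc N < N"
    using phase_round_less[OF k, of j] phase_round_mod[of j k] Suc.prems by simp_all
  have "frozen (state (k * Suc N + j) v) (state (Suc (k * Suc N + j)) v)"
    using state_Suc_placed[OF r(1)] state_Suc_flood[OF r(1) _ r(2)]
      by (cases "placed (state (k * Suc N + j) v)") (simp_all add: frozen_def)
  then show ?case using Suc by (simp add: frozen_def)
qed

definition unplaced where "unplaced r = {v\<in>V. \<not> placed (state r v)}"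

definition unplaced_edge where "unplaced_edge r = {(a,b). E a b \<and> a \<in> unplaced r \<and> b \<in> unplaced r}"

lemma unplaced_iff: "v \<in> unplaced r \<longleftrightarrow> v \<in> V \<and> \<not> placed (state r v)"
  by (simp add: unplaced_def)

lemma unplaced_edge_iff: "(a,b) \<in> unplaced_edge r \<longleftrightarrow> E a b \<and> a \<in> unplaced r \<and> b \<in> unplaced r"
  by (simp add: unplaced_edge_def)

lemma phase_placed:
  assumes "k < N" "j \<le> N"
  shows "placed (state (k * Suc N + j) v) = placed (state (k * Suc N) v)"
  using phase_frozen[OF assms] by (simp add: frozen_def)

lemma elect_msg_flood_step:
  assumes k: "k < N" and j: "j < N" and v: "v \<in> unplaced (k * Suc N)"
  defines "r \<equiv> k * Suc N + j"
  shows "elect_msg N (state (Suc r) v) =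
    Max (insert (elect_msg N (state r v)) ((\<lambda>u. elect_msg N (state r u)) ` {u. E v u}))"
proof -
  have r: "r < election_rounds N" "r mod Suc N < N"
    using phase_round_less[OF k, of j] phase_round_mod[of j k] j by (simp_all add: r_def)
  have unpl: "\<not> placed (state r v)" "\<not> placed (state (Suc r) v)"
    using phase_placed[OF k, of j v] phase_placed[OF k, of "Suc j" v] j v
      by (simp_all add: r_def unplaced_iff)
  have "Suc r mod Suc N \<noteq> 0" using phase_round_mod[of "Suc j" k] j by (simp add: r_def)
  then have "elect_msg N (state (Suc r) v) = best (state (Suc r) v)" using unpl
    by (simp add: elect_msg_def)
  then show ?thesis using state_Suc_flood[OF r(1) unpl(1) r(2)] by simp
qed

lemma phase_flood:
  assumes k: "k < N" and v: "v \<in> unplaced (k * Suc N)"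
  shows "(\<forall>w. (v,w) \<in> (Id_on (unplaced (k * Suc N)) \<union> unplaced_edge (k * Suc N))^^N \<longrightarrow>
        candidate (state (k * Suc N) w) \<le> best (state (k * Suc N + N) v)) \<and>
      (\<exists>w. (v,w) \<in> (Id_on (unplaced (k * Suc N)) \<union> unplaced_edge (k * Suc N))^^N \<and>
        best (state (k * Suc N + N) v) = candidate (state (k * Suc N) w))"
proof -
  define r0 where "r0 = k * Suc N"
  define U where "U = unplaced r0"
  define x where "x j v = elect_msg N (state (r0 + j) v)" for j v
  define c where "c w = candidate (state r0 w)" for w
  have x0: "\<forall>v\<in>U. x 0 v = c v"
    using phase_round_mod[of 0 k]
      by (simp add: x_def c_def elect_msg_def U_def unplaced_def r0_def candidate_def)
  have step: "x (Suc j) v = Max (insert (x j v) ((\<lambda>u. x j u) ` {u. E v u}))" if "j < N" "v \<in> U"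
    for j v
    using elect_msg_flood_step[OF k that(1)] that(2) by (simp add: x_def U_def r0_def)
  have fin: "finite (insert (x j v) ((\<lambda>u. x j u) ` {u. E v u}))" for j v using finite_nbrs by simp
  have mono: "\<forall>j<N. \<forall>v\<in>U. x j v \<le> x (Suc j) v" using step fin by (simp add: Max_ge)
  have nbr: "\<forall>j<N. \<forall>v\<in>U. \<forall>u. (v,u) \<in> unplaced_edge r0 \<longrightarrow> x j u \<le> x (Suc j) v"
    using step fin by (auto simp: unplaced_edge_def intro!: Max_ge)
  have pick: "\<forall>j<N. \<forall>v\<in>U. x (Suc j) v = x j v \<or>
    (\<exists>u. (v,u) \<in> unplaced_edge r0 \<and> x (Suc j) v = x j u)"
  proof (intro allI impI ballI)
    fix j v assume jv: "j < N" "v \<in> U"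
    have "x (Suc j) v \<in> insert (x j v) ((\<lambda>u. x j u) ` {u. E v u})"
      using step[OF jv] Max_in[OF fin] by simp
    then consider "x (Suc j) v = x j v" | u where "E v u" "x (Suc j) v = x j u" by auto
    then show "x (Suc j) v = x j v \<or> (\<exists>u. (v,u) \<in> unplaced_edge r0 \<and> x (Suc j) v = x j u)"
    proof cases
      case 2
      show ?thesis
      proof (cases "u \<in> U")
        case True then show ?thesis using 2 jv by (auto simp: unplaced_edge_def U_def)
      next
        case False
        then have "placed (state (r0 + j) u)"
          using edge_in_V[OF 2(1)] phase_placed[OF k, of j u] jv
            by (simp add: U_def unplaced_def r0_def)
        then have "x (Suc j) v \<le> x j v" using 2 by (simp add: x_def elect_msg_def)
        then show ?thesis using mono jv by (metis order_antisym)
      qed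
    qed simp
  qed
  have "unplaced_edge r0 \<subseteq> U \<times> U" by (auto simp: unplaced_edge_def U_def)
  from max_flooding[of U x c N "unplaced_edge r0", OF x0 mono nbr pick this, of N v]
  have "(\<forall>w. (v,w) \<in> (Id_on U \<union> unplaced_edge r0)^^N \<longrightarrow> c w \<le> x N v) \<and>
      (\<exists>w. (v,w) \<in> (Id_on U \<union> unplaced_edge r0)^^N \<and> x N v = c w)"
    using v by (simp add: U_def r0_def)
  moreover have "x N v = best (state (r0 + N) v)"
    using phase_placed[OF k, of N v] phase_round_mod[of N k] N_ge_2 v
      by (simp add: x_def elect_msg_def unplaced_iff r0_def)
  ultimately show ?thesis unfolding c_def U_def r0_def by simp
qed

lemma unplaced_edge_sym: "(a,b) \<in> unplaced_edge r \<Longrightarrow> (b,a) \<in> unplaced_edge r"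
  using edge_in_V by (auto simp: unplaced_edge_def)

lemma unplaced_edge_rtrancl_sym: "(a,b) \<in> (unplaced_edge r)\<^sup>* \<Longrightarrow> (b,a) \<in> (unplaced_edge r)\<^sup>*"
proof (induction rule: rtrancl_induct)
  case (step y z) then show ?case using unplaced_edge_sym by (meson converse_rtrancl_into_rtrancl)
qed simp

lemma unplaced_edge_rtrancl_unplaced: "(a,b) \<in> (unplaced_edge r)\<^sup>* \<Longrightarrow> a \<in> unplaced r \<Longrightarrow>
  b \<in> unplaced r"
  by (induction rule: rtrancl_induct) (auto simp: unplaced_edge_def)

text \<open>After \<open>k\<close> phases an unplaced vertex is regarded as hanging below its anchor at level \<open>k + 1\<close>;
the invariant then speaks uniformly about placed and unplaced vertices.\<close>

definition tparent where "tparent r v =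
  (if placed (state r v) then parent (state r v) else anchor (state r v))"

definition tlevel where "tlevel k r v = (if placed (state r v) then level (state r v) else Suc k)"

definition phase_inv where "phase_inv k \<longleftrightarrow> (let r = k * Suc N in
  (\<forall>v\<in>V. placed (state r v) \<longrightarrow> 1 \<le> level (state r v) \<and> level (state r v) \<le> k) \<and>
  (\<forall>v\<in>V. tparent r v = None \<longleftrightarrow> tlevel k r v = 1) \<and>
  (\<forall>v\<in>V. \<forall>w. tparent r v = Some w \<longrightarrow>
    w \<in> V \<and> placed (state r w) \<and> Suc (tlevel k r w) = tlevel k r v) \<and>
  (\<forall>v\<in>V. \<forall>w. placed (state r v) \<longrightarrow> parent (state r v) = Some w \<longrightarrow> E v w) \<and>
  (\<forall>u v. E u v \<longrightarrow> placed (state r u) \<or> placed (state r v) \<longrightarrow>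
    ancestor V (tparent r) u v \<or> ancestor V (tparent r) v u) \<and>
  (\<forall>u v. E u v \<longrightarrow> \<not> placed (state r u) \<longrightarrow> \<not> placed (state r v) \<longrightarrow>
    anchor (state r u) = anchor (state r v)) \<and>
  (\<forall>v\<in>V. \<not> placed (state r v) \<longrightarrow>
    (case anchor (state r v) of None \<Rightarrow> k = 0 | Some a \<Rightarrow> \<exists>y. (v,y) \<in> (unplaced_edge r)\<^sup>* \<and> E y a)) \<and>
  (1 \<le> k \<longrightarrow> (\<exists>!x. x \<in> V \<and> tparent r x = None)) \<and>
  (k = 0 \<longrightarrow> (\<forall>v\<in>V. \<not> placed (state r v) \<and> anchor (state r v) = None)))"

definition phase_agreed where "phase_agreed k \<longleftrightarrow> (let r = k * Suc N in
  \<forall>v\<in>unplaced r. best (state (r + N) v) \<noteq> None \<and>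
    (\<forall>u. E v u \<longrightarrow> u \<in> unplaced r \<longrightarrow> best (state (r + N) u) = best (state (r + N) v)))"

lemma phase_inv_0: "phase_inv 0"
  by (simp add: phase_inv_def tparent_def tlevel_def td_init_def)

lemma phase_invD:
  assumes "phase_inv k"
  defines "r \<equiv> k * Suc N"
  shows phase_inv_levels: "\<forall>v\<in>V. placed (state r v) \<longrightarrow> 1 \<le> level (state r v) \<and> level (state r v) \<le> k"
    and phase_inv_root_iff: "\<forall>v\<in>V. tparent r v = None \<longleftrightarrow> tlevel k r v = 1"
    and phase_inv_tparent: "\<forall>v\<in>V. \<forall>w. tparent r v = Some w \<longrightarrow>
      w \<in> V \<and> placed (state r w) \<and> Suc (tlevel k r w) = tlevel k r v"
    and phase_inv_parent_edge: "\<forall>v\<in>V. \<forall>w. placed (state r v) \<longrightarrow> parent (state r v) = Some w \<longrightarrow> E v w"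
    and phase_inv_edge_ancestor: "\<forall>u v. E u v \<longrightarrow> placed (state r u) \<or> placed (state r v) \<longrightarrow>
      ancestor V (tparent r) u v \<or> ancestor V (tparent r) v u"
    and phase_inv_anchor_edge: "\<forall>u v. E u v \<longrightarrow> \<not> placed (state r u) \<longrightarrow> \<not> placed (state r v) \<longrightarrow>
      anchor (state r u) = anchor (state r v)"
    and phase_inv_anchor_reach: "\<forall>v\<in>V. \<not> placed (state r v) \<longrightarrow>
      (case anchor (state r v) of None \<Rightarrow> k = 0 | Some a \<Rightarrow> \<exists>y. (v,y) \<in> (unplaced_edge r)\<^sup>* \<and> E y a)"
    and phase_inv_unique_root: "1 \<le> k \<longrightarrow> (\<exists>!x. x \<in> V \<and> tparent r x = None)"
    and phase_inv_0_unplaced: "k = 0 \<longrightarrow> (\<forall>v\<in>V. \<not> placed (state r v) \<and> anchor (state r v) = None)"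
  using assms(1)[unfolded phase_inv_def Let_def, folded r_def]
  by - (erule conjE, assumption | (erule conjE)+, assumption)+

lemma anchor_eq_rtrancl:
  assumes "phase_inv k" "(v,w) \<in> (unplaced_edge (k * Suc N))\<^sup>*"
  shows "anchor (state (k * Suc N) v) = anchor (state (k * Suc N) w)"
  using assms(2)
proof (induction rule: rtrancl_induct)
  case (step y z) then show ?case
    using phase_inv_anchor_edge[OF assms(1)] unplaced_edge_iff unplaced_iff by metis
qed simp

lemma phase_end:
  assumes k: "k < N"
  defines "r0 \<equiv> k * Suc N" and "r1 \<equiv> Suc k * Suc N"
  shows phase_end_placed: "placed (state r0 v) \<Longrightarrow>
      placed (state r1 v) \<and> level (state r1 v) = level (state r0 v) \<and>
      parent (state r1 v) = parent (state r0 v) \<and> anchor (state r1 v) = anchor (state r0 v) \<and>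
      rejected (state r1 v) = rejected (state r0 v)"
    and phase_end_elected: "\<not> placed (state r0 v) \<Longrightarrow> best (state (r0 + N) v) = Some v \<Longrightarrow>
      placed (state r1 v) \<and> level (state r1 v) = Suc k \<and>
      parent (state r1 v) = anchor (state r0 v) \<and> anchor (state r1 v) = anchor (state r0 v)"
    and phase_end_follower: "\<not> placed (state r0 v) \<Longrightarrow> best (state (r0 + N) v) \<noteq> Some v \<Longrightarrow>
      \<not> placed (state r1 v) \<and> anchor (state r1 v) = best (state (r0 + N) v)"
    and phase_end_rejected: "rejected (state r1 v) =
      (rejected (state r0 v) \<or> (\<not> placed (state r0 v) \<and> election_failed (r0 + N) v))"
proof -
  have fr: "frozen (state r0 v) (state (r0 + N) v)"
    using phase_frozen[OF k, of N v] by (simp add: r0_def)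
  have r: "r0 + N < election_rounds N" "(r0 + N) mod Suc N = N" "(r0 + N) div Suc N = k"
    using phase_round_less[OF k, of N] phase_round_mod[of N k] phase_round_div[of N k]
    by (simp_all add: r0_def)
  have e: "state r1 v = state (Suc (r0 + N)) v"
    by (rule arg_cong[where f="\<lambda>r. state r v"]) (simp add: r0_def r1_def)
  note placed_step = state_Suc_placed[OF r(1), of v] and elect_step = state_Suc_elect[OF r(1) _ r(2), of v]
  show "placed (state r0 v) \<Longrightarrow>
      placed (state r1 v) \<and> level (state r1 v) = level (state r0 v) \<and>
      parent (state r1 v) = parent (state r0 v) \<and> anchor (state r1 v) = anchor (state r0 v) \<and>
      rejected (state r1 v) = rejected (state r0 v)"
    using placed_step fr e by (simp add: frozen_def)
  show "\<not> placed (state r0 v) \<Longrightarrow> best (state (r0 + N) v) = Some v \<Longrightarrow>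
      placed (state r1 v) \<and> level (state r1 v) = Suc k \<and>
      parent (state r1 v) = anchor (state r0 v) \<and> anchor (state r1 v) = anchor (state r0 v)"
    using elect_step fr e r(3) by (simp add: frozen_def)
  show "\<not> placed (state r0 v) \<Longrightarrow> best (state (r0 + N) v) \<noteq> Some v \<Longrightarrow>
      \<not> placed (state r1 v) \<and> anchor (state r1 v) = best (state (r0 + N) v)"
    using elect_step fr e by (simp add: frozen_def)
  show "rejected (state r1 v) =
      (rejected (state r0 v) \<or> (\<not> placed (state r0 v) \<and> election_failed (r0 + N) v))"
    using placed_step elect_step fr e by (cases "placed (state r0 v)") (simp_all add: frozen_def)
qed

end

locale election_phase = td_run +
  fixes k :: nat
  assumes k_less: "k < N" and inv: "phase_inv k" and agreed: "phase_agreed k"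
begin

definition r0 where "r0 = k * Suc N"
definition r1 where "r1 = Suc k * Suc N"

definition winner where "winner v = best (state (r0 + N) v)"
definition elected where "elected v \<longleftrightarrow> v \<in> unplaced r0 \<and> winner v = Some v"
definition follower where "follower v \<longleftrightarrow> v \<in> unplaced r0 \<and> winner v \<noteq> Some v"

lemmas inv_levels = phase_inv_levels[OF inv, folded r0_def]
  and inv_root_iff = phase_inv_root_iff[OF inv, folded r0_def]
  and inv_tparent = phase_inv_tparent[OF inv, folded r0_def]
  and inv_parent_edge = phase_inv_parent_edge[OF inv, folded r0_def]
  and inv_edge_ancestor = phase_inv_edge_ancestor[OF inv, folded r0_def]
  and inv_unique_root = phase_inv_unique_root[OF inv, folded r0_def]
  and inv_0_unplaced = phase_inv_0_unplaced[OF inv, folded r0_def]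
  and anchor_rtrancl = anchor_eq_rtrancl[OF inv, folded r0_def]
  and flood = phase_flood[OF k_less, folded r0_def, folded winner_def]
  and end_placed = phase_end_placed[OF k_less, folded r0_def r1_def, folded winner_def]
  and end_elected = phase_end_elected[OF k_less, folded r0_def r1_def, folded winner_def]
  and end_follower = phase_end_follower[OF k_less, folded r0_def r1_def, folded winner_def]

lemma winner_defined: "v \<in> unplaced r0 \<Longrightarrow> winner v \<noteq> None"
  and winner_edge: "v \<in> unplaced r0 \<Longrightarrow> E v u \<Longrightarrow> u \<in> unplaced r0 \<Longrightarrow> winner u = winner v"
  using agreed unfolding phase_agreed_def Let_def winner_def r0_def by auto

lemma winner_rtrancl: "(v,w) \<in> (unplaced_edge r0)\<^sup>* \<Longrightarrow> winner v = winner w"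
proof (induction rule: rtrancl_induct)
  case (step y z) then show ?case using winner_edge unplaced_edge_iff by metis
qed simp

lemma winner_candidate:
  assumes v: "v \<in> unplaced r0"
  obtains x where "winner v = Some x" "x \<in> unplaced r0" "(v,x) \<in> (unplaced_edge r0)\<^sup>*"
    "candidate (state r0 x) = Some x"
proof -
  from flood[OF v] obtain w
    where w: "(v,w) \<in> (Id_on (unplaced r0) \<union> unplaced_edge r0)^^N"
      "winner v = candidate (state r0 w)"
    by blast
  have vw: "(v,w) \<in> (unplaced_edge r0)\<^sup>*" using relpow_Id_on_Un_rtrancl[OF w(1)] .
  have "candidate (state r0 w) \<noteq> None" using winner_defined[OF v] w(2) by simp
  then have cw: "candidate (state r0 w) = Some w"
    by (auto simp: candidate_def split: if_splits option.splits)
  show ?thesis using that[OF _ unplaced_edge_rtrancl_unplaced[OF vw v] vw cw] w(2) cw by simp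
qed

lemma winner_elected:
  assumes "v \<in> unplaced r0" "winner v = Some x"
  shows "elected x \<and> anchor (state r0 x) = anchor (state r0 v) \<and> (v,x) \<in> (unplaced_edge r0)\<^sup>* \<and>
    candidate (state r0 x) = Some x"
proof -
  obtain x' where x': "winner v = Some x'" "x' \<in> unplaced r0" "(v,x') \<in> (unplaced_edge r0)\<^sup>*"
    "candidate (state r0 x') = Some x'" using winner_candidate[OF assms(1)] .
  have "x' = x" using x'(1) assms(2) by simp
  then show ?thesis
    using x' winner_rtrancl[OF x'(3)] anchor_rtrancl[OF x'(3)] assms by (auto simp: elected_def)
qed

lemma elected_in_V: "elected x \<Longrightarrow> x \<in> V"
  by (simp add: elected_def unplaced_iff)

lemma follower_unplaced: "follower v \<Longrightarrow> v \<in> unplaced r0"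
  by (simp add: follower_def)

lemma follower_winner:
  assumes "follower v"
  shows "\<exists>x. winner v = Some x \<and> elected x \<and> x \<noteq> v \<and> anchor (state r0 x) = anchor (state r0 v) \<and>
    (v,x) \<in> (unplaced_edge r0)\<^sup>* \<and> candidate (state r0 x) = Some x"
proof -
  obtain x where "winner v = Some x" using winner_defined assms by (auto simp: follower_def)
  then show ?thesis using winner_elected[of v x] assms by (auto simp: follower_def)
qed

lemma placed_next_iff: "v \<in> V \<Longrightarrow> placed (state r1 v) \<longleftrightarrow> placed (state r0 v) \<or> elected v"
  using end_placed[of v] end_elected[of v] end_follower[of v]
    by (auto simp: elected_def unplaced_iff)

lemma elected_placed_next: "elected x \<Longrightarrow> placed (state r1 x)"
  using placed_next_iff elected_in_V by blast

lemma placed_next_or_follower: "v \<in> V \<Longrightarrow> placed (state r1 v) \<or> follower v"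
  using placed_next_iff by (auto simp: follower_def elected_def unplaced_iff)

lemma tparent_tlevel_next_placed:
  assumes "v \<in> V" "placed (state r1 v)"
  shows "tparent r1 v = tparent r0 v \<and> tlevel (Suc k) r1 v = tlevel k r0 v"
proof (cases "placed (state r0 v)")
  case True then show ?thesis using end_placed[of v] by (simp add: tparent_def tlevel_def)
next
  case False
  then have "elected v" using placed_next_iff assms by blast
  then show ?thesis using end_elected[of v] False by (simp add: tparent_def tlevel_def elected_def)
qed

lemma tparent_tlevel_next_follower:
  "follower v \<Longrightarrow> tparent r1 v = winner v \<and> tlevel (Suc k) r1 v = Suc (Suc k) \<and> \<not> placed (state r1 v)"
  using end_follower[of v] by (simp add: tparent_def tlevel_def follower_def unplaced_iff)

lemma levels_next: "\<forall>v\<in>V. placed (state r1 v) \<longrightarrow> 1 \<le> level (state r1 v) \<and> level (state r1 v) \<le> Suc k"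
proof (intro ballI impI)
  fix v assume v: "v \<in> V" "placed (state r1 v)"
  show "1 \<le> level (state r1 v) \<and> level (state r1 v) \<le> Suc k"
  proof (cases "placed (state r0 v)")
    case True then show ?thesis using end_placed[of v] inv_levels v by auto
  next
    case False then have "elected v" using placed_next_iff v by blast
    then show ?thesis using end_elected[of v] False by (simp add: elected_def)
  qed
qed

lemma root_iff_next: "\<forall>v\<in>V. tparent r1 v = None \<longleftrightarrow> tlevel (Suc k) r1 v = 1"
proof
  fix v assume v: "v \<in> V"
  show "tparent r1 v = None \<longleftrightarrow> tlevel (Suc k) r1 v = 1"
  proof (cases "placed (state r1 v)")
    case True then show ?thesis using tparent_tlevel_next_placed[OF v True] inv_root_iff v by simp
  next
    case False then have "follower v" using placed_next_or_follower v by blast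
    then show ?thesis using tparent_tlevel_next_follower winner_defined follower_unplaced by auto
  qed
qed

lemma tparent_next: "\<forall>v\<in>V. \<forall>w. tparent r1 v = Some w \<longrightarrow>
  w \<in> V \<and> placed (state r1 w) \<and> Suc (tlevel (Suc k) r1 w) = tlevel (Suc k) r1 v"
proof (intro ballI allI impI)
  fix v w assume v: "v \<in> V" and q: "tparent r1 v = Some w"
  show "w \<in> V \<and> placed (state r1 w) \<and> Suc (tlevel (Suc k) r1 w) = tlevel (Suc k) r1 v"
  proof (cases "placed (state r1 v)")
    case True
    then have "tparent r0 v = Some w" using tparent_tlevel_next_placed[OF v True] q by simp
    then have w: "w \<in> V" "placed (state r0 w)" "Suc (tlevel k r0 w) = tlevel k r0 v"
      using inv_tparent v by auto
    then have "placed (state r1 w)" using placed_next_iff by blast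
    then show ?thesis
      using tparent_tlevel_next_placed[OF w(1)] tparent_tlevel_next_placed[OF v True] w by simp
  next
    case False then have fv: "follower v" using placed_next_or_follower v by blast
    then obtain x where x: "winner v = Some x" "elected x" using follower_winner by blast
    have "w = x" using tparent_tlevel_next_follower[OF fv] q x by simp
    moreover have "tlevel (Suc k) r1 x = Suc k"
      using end_elected[of x] x(2) by (simp add: tlevel_def elected_def unplaced_iff)
    ultimately show ?thesis
      using x elected_in_V elected_placed_next tparent_tlevel_next_follower[OF fv] by simp
  qed
qed

lemma parent_edge_next: "\<forall>v\<in>V. \<forall>w. placed (state r1 v) \<longrightarrow> parent (state r1 v) = Some w \<longrightarrow> E v w"
proof (intro ballI allI impI)
  fix v w assume v: "v \<in> V" "placed (state r1 v)" "parent (state r1 v) = Some w"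
  show "E v w"
  proof (cases "placed (state r0 v)")
    case True then show ?thesis using end_placed[of v] inv_parent_edge v by auto
  next
    case False
    then have ev: "elected v" using placed_next_iff v by blast
    then have "anchor (state r0 v) = Some w" using end_elected[of v] v False
      by (simp add: elected_def)
    moreover have "candidate (state r0 v) = Some v" using winner_elected[of v v] ev
      by (simp add: elected_def)
    ultimately show ?thesis using False by (auto simp: candidate_def split: if_splits)
  qed
qed

lemma tparent_rel_placed: "(a,b) \<in> parent_rel V (tparent r0) \<Longrightarrow> placed (state r0 b) \<and> b \<in> V"
  using inv_tparent by (auto simp: parent_rel_def)

lemma tparent_trancl_placed: "(a,b) \<in> (parent_rel V (tparent r0))\<^sup>+ \<Longrightarrow> placed (state r0 b) \<and> b \<in> V"
  by (induction rule: trancl_induct) (auto dest: tparent_rel_placed)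

lemma ancestor_next:
  "(a,b) \<in> (parent_rel V (tparent r0))\<^sup>+ \<Longrightarrow> placed (state r1 a) \<Longrightarrow>
    (a,b) \<in> (parent_rel V (tparent r1))\<^sup>+"
proof (induction rule: converse_trancl_induct)
  case (base a)
  then have "a \<in> V" "tparent r0 a = Some b" by (auto simp: parent_rel_def)
  then show ?case using tparent_tlevel_next_placed base by (auto simp: parent_rel_def)
next
  case (step a c)
  then have "a \<in> V" "tparent r0 a = Some c" by (auto simp: parent_rel_def)
  then have "(a,c) \<in> parent_rel V (tparent r1)" using tparent_tlevel_next_placed step
    by (auto simp: parent_rel_def)
  moreover have "placed (state r1 c)" using tparent_rel_placed[OF step(1)] placed_next_iff by blast
  ultimately show ?case using step by (meson trancl_into_trancl2)
qed

lemma ancestor_rtrancl_next: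
  "(a,b) \<in> (parent_rel V (tparent r0))\<^sup>* \<Longrightarrow> placed (state r1 a) \<Longrightarrow>
    (a,b) \<in> (parent_rel V (tparent r1))\<^sup>*"
  using ancestor_next by (metis rtrancl_eq_or_trancl trancl_into_rtrancl)

lemma follower_parent_rel_next: "follower v \<Longrightarrow> winner v = Some x \<Longrightarrow>
  (v, x) \<in> parent_rel V (tparent r1)"
  using tparent_tlevel_next_follower by (auto simp: parent_rel_def follower_def unplaced_iff)

lemma unplaced_ancestor_next:
  assumes v: "v \<in> unplaced r0" and a: "tparent r0 v = Some a"
  shows "(v,a) \<in> (parent_rel V (tparent r1))\<^sup>+"
proof (cases "elected v")
  case True
  then have "tparent r1 v = Some a"
    using tparent_tlevel_next_placed elected_placed_next elected_in_V a by simp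
  then show ?thesis using v by (auto simp: parent_rel_def unplaced_iff)
next
  case False
  then have fv: "follower v" using v by (simp add: elected_def follower_def)
  then obtain x where x: "winner v = Some x" "elected x" "anchor (state r0 x) = anchor (state r0 v)"
    using follower_winner by blast
  have "tparent r0 x = tparent r0 v" using x(2,3) v
    by (simp add: tparent_def elected_def unplaced_iff)
  then have "tparent r1 x = Some a"
    using tparent_tlevel_next_placed elected_placed_next[OF x(2)] elected_in_V[OF x(2)] a by simp
  then have "(x,a) \<in> parent_rel V (tparent r1)" using elected_in_V[OF x(2)]
    by (simp add: parent_rel_def)
  then show ?thesis using follower_parent_rel_next[OF fv x(1)] by auto
qed

lemma edge_placed_unplaced_ancestor_next:
  assumes ab: "E a b" "placed (state r0 a)" "\<not> placed (state r0 b)"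
  shows "ancestor V (tparent r1) a b"
proof -
  from inv_edge_ancestor ab have "ancestor V (tparent r0) a b \<or> ancestor V (tparent r0) b a"
    by blast
  then have "(b,a) \<in> (parent_rel V (tparent r0))\<^sup>+"
    using tparent_trancl_placed ab(3) by (auto simp: ancestor_def)
  then obtain c where c: "(b,c) \<in> parent_rel V (tparent r0)" "(c,a) \<in> (parent_rel V (tparent r0))\<^sup>*"
    by (meson tranclD)
  have "b \<in> unplaced r0" using edge_in_V[OF ab(1)] ab by (simp add: unplaced_iff)
  moreover have "tparent r0 b = Some c" using c(1) by (simp add: parent_rel_def)
  ultimately have "(b,c) \<in> (parent_rel V (tparent r1))\<^sup>+" by (rule unplaced_ancestor_next)
  moreover have "placed (state r1 c)" using tparent_rel_placed[OF c(1)] placed_next_iff by blast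
  then have "(c,a) \<in> (parent_rel V (tparent r1))\<^sup>*" using ancestor_rtrancl_next c(2) by blast
  ultimately show ?thesis by (auto simp: ancestor_def)
qed

lemma edge_elected_ancestor_next:
  assumes "elected a" "b \<in> unplaced r0" "winner b = winner a" "a \<noteq> b"
  shows "ancestor V (tparent r1) a b"
proof -
  have "follower b" "winner b = Some a" using assms by (auto simp: elected_def follower_def)
  then show ?thesis using follower_parent_rel_next by (auto simp: ancestor_def)
qed

lemma edge_ancestor_next: "\<forall>u v. E u v \<longrightarrow> placed (state r1 u) \<or> placed (state r1 v) \<longrightarrow>
  ancestor V (tparent r1) u v \<or> ancestor V (tparent r1) v u"
proof (intro allI impI)
  fix u v assume uv: "E u v" and p: "placed (state r1 u) \<or> placed (state r1 v)"
  have uvV: "u \<in> V" "v \<in> V" "u \<noteq> v" "E v u" using edge_in_V[OF uv] by auto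
  consider (pp) "placed (state r0 u)" "placed (state r0 v)"
    | (pu) "placed (state r0 u)" "\<not> placed (state r0 v)"
    | (up) "\<not> placed (state r0 u)" "placed (state r0 v)"
    | (uu) "\<not> placed (state r0 u)" "\<not> placed (state r0 v)"
    by blast
  then show "ancestor V (tparent r1) u v \<or> ancestor V (tparent r1) v u"
  proof cases
    case pp
    then have "ancestor V (tparent r0) u v \<or> ancestor V (tparent r0) v u" using inv_edge_ancestor uv
      by blast
    moreover have "placed (state r1 u)" "placed (state r1 v)" using pp placed_next_iff uvV by blast+
    ultimately show ?thesis using ancestor_next by (auto simp: ancestor_def)
  next
    case pu then show ?thesis using edge_placed_unplaced_ancestor_next uv by blast
  next
    case up then show ?thesis using edge_placed_unplaced_ancestor_next uvV(4) by blast
  next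
    case uu
    have U2: "u \<in> unplaced r0" "v \<in> unplaced r0" using uu uvV by (auto simp: unplaced_iff)
    have "winner u = winner v" using winner_edge U2 uvV(4) by metis
    moreover from p have "elected u \<or> elected v" using placed_next_iff uu uvV by blast
    ultimately show ?thesis using edge_elected_ancestor_next U2 uvV(3) by metis
  qed
qed

lemma anchor_edge_next: "\<forall>u v. E u v \<longrightarrow> \<not> placed (state r1 u) \<longrightarrow> \<not> placed (state r1 v) \<longrightarrow>
  anchor (state r1 u) = anchor (state r1 v)"
proof (intro allI impI)
  fix u v assume uv: "E u v" "\<not> placed (state r1 u)" "\<not> placed (state r1 v)"
  have "follower u" "follower v" using placed_next_or_follower uv edge_in_V by blast+
  moreover then have "winner u = winner v" using winner_edge uv edge_in_V follower_unplaced by metis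
  ultimately show "anchor (state r1 u) = anchor (state r1 v)"
    using end_follower by (simp add: follower_def unplaced_iff)
qed

lemma anchor_reach_next: "\<forall>v\<in>V. \<not> placed (state r1 v) \<longrightarrow>
  (case anchor (state r1 v) of None \<Rightarrow> Suc k = 0 | Some a \<Rightarrow> \<exists>y. (v,y) \<in> (unplaced_edge r1)\<^sup>* \<and>
    E y a)"
proof (intro ballI impI)
  fix v assume v: "v \<in> V" "\<not> placed (state r1 v)"
  then have fv: "follower v" using placed_next_or_follower by blast
  then obtain x where x: "winner v = Some x" "elected x" "x \<noteq> v" "(v,x) \<in> (unplaced_edge r0)\<^sup>*"
    using follower_winner by blast
  have anchor_v: "anchor (state r1 v) = Some x"
    using end_follower[of v] fv x(1) by (simp add: follower_def unplaced_iff)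
  have follower_R: "follower w" if "(w,x) \<in> (unplaced_edge r0)\<^sup>*" "w \<noteq> x" for w
  proof -
    have "(x,w) \<in> (unplaced_edge r0)\<^sup>*" using that(1) by (rule unplaced_edge_rtrancl_sym)
    then have "w \<in> unplaced r0" using unplaced_edge_rtrancl_unplaced x(2) by (simp add: elected_def)
    moreover have "winner w = Some x" using winner_rtrancl[OF that(1)] x(2)
      by (simp add: elected_def)
    ultimately show ?thesis using that(2) by (simp add: follower_def)
  qed
  have "\<exists>y. (w,y) \<in> (unplaced_edge r1)\<^sup>* \<and> E y x" if "(w,x) \<in> (unplaced_edge r0)\<^sup>*" "w \<noteq> x" for w
    using that
  proof (induction rule: converse_rtrancl_induct)
    case (step w w')
    show ?case
    proof (cases "w' = x")
      case True then show ?thesis using step(1) unplaced_edge_iff by auto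
    next
      case False
      then obtain y where y: "(w',y) \<in> (unplaced_edge r1)\<^sup>*" "E y x" using step by blast
      have "follower w" "follower w'"
        using follower_R step False by (auto intro: converse_rtrancl_into_rtrancl)
      then have "(w,w') \<in> unplaced_edge r1"
        using tparent_tlevel_next_follower step(1) follower_unplaced unplaced_edge_iff unplaced_iff
          by auto
      then show ?thesis using y by (meson converse_rtrancl_into_rtrancl)
    qed
  qed simp
  then show "case anchor (state r1 v) of
      None \<Rightarrow> Suc k = 0 | Some a \<Rightarrow> \<exists>y. (v,y) \<in> (unplaced_edge r1)\<^sup>* \<and> E y a"
    using anchor_v x by simp
qed

lemma roots_first_phase:
  assumes "k = 0"
  shows "x \<in> V \<and> tparent r1 x = None \<longleftrightarrow> elected x"
proof
  assume a: "x \<in> V \<and> tparent r1 x = None"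
  show "elected x"
  proof (rule ccontr)
    assume "\<not> elected x"
    moreover have "\<not> placed (state r0 x)" using inv_0_unplaced assms a by blast
    ultimately have "follower x" using a by (simp add: elected_def follower_def unplaced_iff)
    then show False using tparent_tlevel_next_follower winner_defined follower_unplaced a by metis
  qed
next
  assume ex: "elected x"
  then have "tparent r1 x = tparent r0 x"
    using tparent_tlevel_next_placed elected_placed_next elected_in_V by blast
  moreover have "tparent r0 x = None" using inv_0_unplaced assms elected_in_V[OF ex]
    by (simp add: tparent_def)
  ultimately show "x \<in> V \<and> tparent r1 x = None" using elected_in_V[OF ex] by simp
qed

lemma unique_root_next: "\<exists>!x. x \<in> V \<and> tparent r1 x = None"
proof (cases "k = 0")
  case True
  have all_unplaced: "v \<in> unplaced r0" if "v \<in> V" for v using inv_0_unplaced True that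
    by (simp add: unplaced_iff)
  have connected: "(u,v) \<in> (unplaced_edge r0)\<^sup>*" if "u \<in> V" "v \<in> V" for u v
  proof -
    have "(u,v) \<in> {(x,y). E x y}\<^sup>*" using graph_connected that by (auto simp: connected_graph_def)
    moreover have "{(x,y). E x y} \<subseteq> unplaced_edge r0" using all_unplaced edge_in_V unplaced_edge_iff
      by auto
    ultimately show ?thesis using rtrancl_mono by blast
  qed
  obtain v0 where v0: "v0 \<in> V" using V_nonempty by blast
  obtain x where x1: "winner v0 = Some x" using winner_defined[OF all_unplaced[OF v0]] by auto
  then have x: "winner v0 = Some x" "elected x" using winner_elected[OF all_unplaced[OF v0]] by auto
  have "elected y \<Longrightarrow> y = x" for y
    using winner_rtrancl[OF connected[OF v0 elected_in_V]] x by (simp add: elected_def)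
  then show ?thesis using roots_first_phase[OF True] x by blast
next
  case False
  have "x \<in> V \<and> tparent r1 x = None \<longleftrightarrow> x \<in> V \<and> tparent r0 x = None" for x
  proof (cases "x \<in> V \<and> placed (state r1 x)")
    case True then show ?thesis using tparent_tlevel_next_placed by auto
  next
    case nt: False
    show ?thesis
    proof (cases "x \<in> V")
      case True
      then have fx: "follower x" using nt placed_next_or_follower by blast
      have "tparent r1 x \<noteq> None"
        using tparent_tlevel_next_follower[OF fx] winner_defined follower_unplaced[OF fx] by simp
      moreover have "tlevel k r0 x = Suc k" using fx
        by (simp add: tlevel_def follower_def unplaced_iff)
      then have "tparent r0 x \<noteq> None" using inv_root_iff True False by simp
      ultimately show ?thesis by force
    qed simp
  qed
  then show ?thesis using inv_unique_root False by simp
qed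

lemma phase_inv_next: "phase_inv (Suc k)"
  unfolding phase_inv_def Let_def r1_def[symmetric]
  using levels_next root_iff_next tparent_next parent_edge_next edge_ancestor_next anchor_edge_next
    anchor_reach_next unique_root_next by simp

end

context td_run
begin

lemma phase_inv_Suc:
  assumes "k < N" "phase_inv k" "phase_agreed k"
  shows "phase_inv (Suc k)"
proof -
  interpret election_phase V E N k
    by (rule election_phase.intro[OF td_run_axioms election_phase_axioms.intro[OF assms]])
  show ?thesis by (rule phase_inv_next)
qed

lemma phase_inv_upto:
  assumes "\<forall>k<N. phase_inv k \<longrightarrow> phase_agreed k"
  shows "k \<le> N \<Longrightarrow> phase_inv k"
proof (induction k)
  case 0 then show ?case using phase_inv_0 by simp
next
  case (Suc k) then show ?case using assms phase_inv_Suc by simp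
qed

lemma rejected_mono: "r \<le> r' \<Longrightarrow> rejected (state r v) \<Longrightarrow> rejected (state r' v)"
proof (induction r' rule: dec_induct)
  case (step r')
  then show ?case using td_step_rejected by (simp add: state_Suc)
qed simp

lemma phase_agreed_iff_no_failure:
  assumes k: "k < N"
  shows "phase_agreed k \<longleftrightarrow> (\<forall>v\<in>unplaced (k * Suc N). \<not> election_failed (k * Suc N + N) v)"
proof -
  define r0 where "r0 = k * Suc N"
  have frozen_placed: "placed (state (r0 + N) u) = placed (state r0 u)" for u
    using phase_frozen[OF k, of N u] by (simp add: frozen_def r0_def)
  have "(r0 + N) mod Suc N = N" using phase_round_mod[of N k] by (simp add: r0_def)
  then have msg: "elect_msg N (state (r0 + N) u) =
      (if placed (state r0 u) then None else best (state (r0 + N) u))" for u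
    using frozen_placed N_ge_2 by (simp add: elect_msg_def)
  have "phase_agreed k \<longleftrightarrow> (\<forall>v\<in>unplaced r0. \<not> election_failed (r0 + N) v)"
  proof
    assume "phase_agreed k"
    then show "\<forall>v\<in>unplaced r0. \<not> election_failed (r0 + N) v"
      unfolding phase_agreed_def Let_def r0_def[symmetric] election_failed_def msg
      using edge_in_V by (auto simp: unplaced_iff)
  next
    assume ok: "\<forall>v\<in>unplaced r0. \<not> election_failed (r0 + N) v"
    have defined: "best (state (r0 + N) v) \<noteq> None" if "v \<in> unplaced r0" for v
      using ok that by (simp add: election_failed_def)
    have "best (state (r0 + N) u) = best (state (r0 + N) v)"
      if "v \<in> unplaced r0" "E v u" "u \<in> unplaced r0" for u v
      using ok[rule_format, OF that(1)] defined[OF that(3)] that(2,3)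
      unfolding election_failed_def msg by (auto simp: unplaced_iff)
    then show "phase_agreed k"
      unfolding phase_agreed_def Let_def r0_def[symmetric] using defined by blast
  qed
  then show ?thesis by (simp add: r0_def)
qed

lemma no_reject_agreed:
  assumes "k < N" and "\<forall>v\<in>V. \<not> rejected (state (Suc k * Suc N) v)"
  shows "phase_agreed k"
  using assms phase_end_rejected[OF assms(1)]
    by (auto simp: phase_agreed_iff_no_failure unplaced_iff)

lemma agreed_rejected_unchanged:
  assumes "k < N" and "phase_agreed k" and "v \<in> V"
  shows "rejected (state (Suc k * Suc N) v) = rejected (state (k * Suc N) v)"
  using assms phase_end_rejected[OF assms(1), of v]
  by (auto simp: phase_agreed_iff_no_failure unplaced_iff)

definition short_walks where "short_walks \<longleftrightarrow>
  (\<forall>ps. walk E ps \<longrightarrow> distinct ps \<longrightarrow> set ps \<subseteq> V \<longrightarrow> length ps < N)"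

lemma unplaced_component_relpow:
  assumes sh: short_walks and vw: "(v,w) \<in> (unplaced_edge r)\<^sup>*" and v: "v \<in> unplaced r"
  shows "(v,w) \<in> (Id_on (unplaced r) \<union> unplaced_edge r)^^N"
proof -
  have "(\<lambda>a b. (a,b) \<in> unplaced_edge r)\<^sup>*\<^sup>* v w" using vw unfolding rtrancl_def by simp
  then obtain xs where xs: "rtrancl_path (\<lambda>a b. (a,b) \<in> unplaced_edge r) v xs w"
    unfolding rtranclp_eq_rtrancl_path by blast
  from rtrancl_path_distinct[OF xs] obtain ys
    where ys: "rtrancl_path (\<lambda>a b. (a,b) \<in> unplaced_edge r) v ys w" "distinct (v # ys)"
    by blast
  have ep: "walk E (v # ys)" using rtrancl_path_walk[OF ys(1)] by (auto simp: unplaced_edge_def)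
  have toV: "\<forall>a b. (a,b) \<in> unplaced_edge r \<longrightarrow> b \<in> V" by (auto simp: unplaced_edge_def unplaced_def)
  have vV: "v \<in> V" using v by (simp add: unplaced_def)
  have in_V: "set (v # ys) \<subseteq> V" by (rule rtrancl_path_set[OF ys(1) vV toV])
  have len: "length (v # ys) < N" using sh ep ys(2) in_V unfolding short_walks_def by blast
  have eqR: "{(a,b). (a,b) \<in> unplaced_edge r} = unplaced_edge r" by auto
  have "(v,w) \<in> (unplaced_edge r)^^(length ys)" using rtrancl_path_relpow[OF ys(1)] eqR by simp
  then have p1: "(v,w) \<in> (Id_on (unplaced r) \<union> unplaced_edge r)^^(length ys)"
    using relpow_mono[of "unplaced_edge r" "Id_on (unplaced r) \<union> unplaced_edge r" "length ys"]
      by blast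
  have "w \<in> unplaced r" using unplaced_edge_rtrancl_unplaced[OF vw v] .
  then have ww: "(w,w) \<in> Id_on (unplaced r) \<union> unplaced_edge r" by blast
  have "(v,w) \<in> (Id_on (unplaced r) \<union> unplaced_edge r)^^(length ys + (N - length ys))"
    by (rule relpow_pad_loop[OF p1 ww])
  moreover have "length ys + (N - length ys) = N" using len by simp
  ultimately show ?thesis by simp
qed

lemma short_walks_agreed:
  assumes sh: short_walks and k: "k < N" and I: "phase_inv k"
  shows "phase_agreed k"
proof -
  define r0 where "r0 = k * Suc N"
  define U where "U = unplaced r0"
  define R where "R = unplaced_edge r0"
  define m where "m v = best (state (r0 + N) v)" for v
  have fl: "(\<forall>w. (v,w) \<in> R\<^sup>* \<longrightarrow> candidate (state r0 w) \<le> m v) \<and>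
    (\<exists>w. (v,w) \<in> R\<^sup>* \<and> m v = candidate (state r0 w))"
    if v: "v \<in> U" for v
  proof -
    from phase_flood[OF k, folded r0_def, OF v[unfolded U_def]] obtain w
      where w: "(v,w) \<in> (Id_on U \<union> R)^^N" "m v = candidate (state r0 w)"
        and up: "\<forall>w. (v,w) \<in> (Id_on U \<union> R)^^N \<longrightarrow> candidate (state r0 w) \<le> m v"
      by (auto simp: U_def R_def m_def)
    show ?thesis
      using relpow_Id_on_Un_rtrancl[OF w(1)] w(2) up
        unplaced_component_relpow[OF sh _ v[unfolded U_def]]
      unfolding U_def R_def by blast
  qed
  have candex: "\<exists>y. (v,y) \<in> R\<^sup>* \<and> candidate (state r0 y) = Some y" if v: "v \<in> U" for v
  proof (cases "anchor (state r0 v)")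
    case None
    then show ?thesis using v by (auto simp: candidate_def U_def unplaced_iff)
  next
    case (Some a)
    then obtain y where y: "(v,y) \<in> R\<^sup>*" "E y a"
      using phase_inv_anchor_reach[OF I, folded r0_def] v by (force simp: U_def R_def unplaced_iff)
    have "y \<in> U" using unplaced_edge_rtrancl_unplaced[of v y r0] y v by (simp add: R_def U_def)
    moreover have "anchor (state r0 y) = Some a"
      using anchor_eq_rtrancl[OF I, folded r0_def] y(1) Some by (simp add: R_def)
    ultimately show ?thesis using y by (auto simp: candidate_def U_def unplaced_iff)
  qed
  show ?thesis
    unfolding phase_agreed_def Let_def r0_def[symmetric] U_def[symmetric] m_def[symmetric]
  proof (intro ballI conjI allI impI)
    fix v assume v: "v \<in> U"
    obtain y where y: "(v,y) \<in> R\<^sup>*" "candidate (state r0 y) = Some y" using candex[OF v] by blast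
    then have "candidate (state r0 y) \<le> m v" using fl[OF v] by blast
    then have "Some y \<le> m v" using y(2) by simp
    then show "m v \<noteq> None" by (cases "m v") auto
    fix u assume u: "E v u" "u \<in> U"
    have vu: "(v,u) \<in> R" "(u,v) \<in> R" using u v edge_in_V[OF u(1)]
      by (auto simp: R_def unplaced_edge_def U_def)
    obtain w1 where w1: "(v,w1) \<in> R\<^sup>*" "m v = candidate (state r0 w1)" using fl[OF v] by blast
    obtain w2 where w2: "(u,w2) \<in> R\<^sup>*" "m u = candidate (state r0 w2)" using fl[OF u(2)] by blast
    have "(u,w1) \<in> R\<^sup>*" using vu(2) w1(1) by (rule converse_rtrancl_into_rtrancl)
    then have "candidate (state r0 w1) \<le> m u" using fl[OF u(2)] by blast
    then have "m v \<le> m u" using w1(2) by simp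
    moreover have "(v,w2) \<in> R\<^sup>*" using vu(1) w2(1) by (rule converse_rtrancl_into_rtrancl)
    then have "candidate (state r0 w2) \<le> m v" using fl[OF v] by blast
    then have "m u \<le> m v" using w2(2) by simp
    ultimately show "m u = m v" by simp
  qed
qed

lemma placed_level_walk:
  assumes I: "phase_inv k"
  defines "r \<equiv> k * Suc N"
  shows "a \<in> V \<Longrightarrow> placed (state r a) \<Longrightarrow> level (state r a) = h \<Longrightarrow>
    \<exists>ps. ps \<noteq> [] \<and> hd ps = a \<and> length ps = h \<and> walk E ps \<and> distinct ps \<and>
      (\<forall>z\<in>set ps. z \<in> V \<and> placed (state r z) \<and> level (state r z) \<le> h)"
proof (induction h arbitrary: a)
  case 0 then show ?case using phase_inv_levels[OF I] by (auto simp: r_def)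
next
  case (Suc h)
  show ?case
  proof (cases "h = 0")
    case True then show ?thesis using Suc.prems by (intro exI[of _ "[a]"]) (auto simp: walk_def)
  next
    case False
    have H: "tlevel k r a = Suc h" using Suc.prems by (simp add: tlevel_def)
    then have "tparent r a \<noteq> None" using phase_inv_root_iff[OF I] Suc.prems False
      by (auto simp: r_def)
    then obtain w where w: "parent (state r a) = Some w" using Suc.prems by (auto simp: tparent_def)
    then have q: "tparent r a = Some w" using Suc.prems by (simp add: tparent_def)
    have w2: "w \<in> V" "placed (state r w)" "Suc (tlevel k r w) = tlevel k r a"
      using phase_inv_tparent[OF I] Suc.prems q by (auto simp: r_def)
    have lw: "level (state r w) = h" using w2 H by (simp add: tlevel_def)
    have Eaw: "E a w" using phase_inv_parent_edge[OF I] Suc.prems w by (auto simp: r_def)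
    obtain ps where ps: "ps \<noteq> []" "hd ps = w" "length ps = h" "walk E ps" "distinct ps"
      "\<forall>z\<in>set ps. z \<in> V \<and> placed (state r z) \<and> level (state r z) \<le> h"
        using Suc.IH[OF w2(1) w2(2) lw] by blast
    obtain rest where pr: "ps = w # rest" using ps(1,2) by (cases ps) auto
    have "a \<notin> set ps" using ps(6) Suc.prems by auto
    moreover have "walk E (a # ps)" using ps(4) Eaw pr by (simp add: walk_Cons)
    ultimately show ?thesis using ps Suc.prems by (intro exI[of _ "a # ps"]) auto
  qed
qed

text \<open>The anchor of a vertex unplaced after \<open>N\<close> phases has level \<open>N\<close>; its path to the root, extended
by a neighbour in the unplaced component, is a simple walk with \<open>N + 1\<close> vertices.\<close>

lemma all_placed:
  assumes sh: short_walks and I: "phase_inv N"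
  shows "\<forall>v\<in>V. placed (state (N * Suc N) v)"
proof (rule ccontr)
  define r where "r = N * Suc N"
  assume "\<not> (\<forall>v\<in>V. placed (state (N * Suc N) v))"
  then obtain y where y: "y \<in> V" "\<not> placed (state r y)" by (auto simp: r_def)
  have "case anchor (state r y) of
      None \<Rightarrow> N = 0 | Some a \<Rightarrow> \<exists>y'. (y,y') \<in> (unplaced_edge r)\<^sup>* \<and> E y' a"
    using phase_inv_anchor_reach[OF I, folded r_def] y by blast
  then obtain a y' where a: "anchor (state r y) = Some a" "(y,y') \<in> (unplaced_edge r)\<^sup>*" "E y' a"
    using N_ge_2 by (auto split: option.splits)
  have q: "tparent r y = Some a" using a y by (simp add: tparent_def)
  have a2: "a \<in> V" "placed (state r a)" "Suc (tlevel N r a) = tlevel N r y"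
    using phase_inv_tparent[OF I] y q by (auto simp: r_def)
  have la: "level (state r a) = N" using a2 y by (simp add: tlevel_def)
  obtain ps where ps: "ps \<noteq> []" "hd ps = a" "length ps = N" "walk E ps" "distinct ps"
      "\<forall>z\<in>set ps. z \<in> V \<and> placed (state r z) \<and> level (state r z) \<le> N"
    using placed_level_walk[OF I, of a N] a2 la by (auto simp: r_def)
  have y'U: "y' \<in> unplaced r" using unplaced_edge_rtrancl_unplaced[OF a(2)] y
    by (simp add: unplaced_def)
  have "y' \<notin> set ps" using ps(6) y'U by (auto simp: unplaced_def)
  moreover obtain rest where pr: "ps = a # rest" using ps(1,2) by (cases ps) auto
  moreover have "walk E (y' # ps)" using ps(4) a(3) pr by (simp add: walk_Cons)
  ultimately have ep: "walk E (y' # ps)" and dps: "distinct (y' # ps)" using ps(5) by auto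
  have sps: "set (y' # ps) \<subseteq> V" using ps(6) y'U by (auto simp: unplaced_def)
  have "length (y' # ps) < N" using sh ep dps sps unfolding short_walks_def by blast
  then show False using ps(3) by simp
qed

section \<open>Depth computation\<close>

lemma state_Suc_after_election: "election_rounds N < r \<Longrightarrow>
  placed (state (Suc r) v) = placed (state r v) \<and> level (state (Suc r) v) = level (state r v) \<and>
  parent (state (Suc r) v) = parent (state r v) \<and> rejected (state (Suc r) v) = rejected (state r v) \<and>
  children (state (Suc r) v) = children (state r v)"
proof (cases "r \<le> election_rounds N + N * (2*N)")
  case True
  assume "election_rounds N < r"
  then show ?thesis using state_Suc_count[OF _ True, of v] by (simp add: Let_def)
next
  case False then show ?thesis using state_Suc_idle[of r v] by simp
qed

lemma state_after_election:
  defines "t \<equiv> election_rounds N"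
  shows "placed (state (Suc t + i) v) = placed (state t v) \<and>
    level (state (Suc t + i) v) = level (state t v) \<and> parent (state (Suc t + i) v) = parent (state t v) \<and>
    rejected (state (Suc t + i) v) = (rejected (state t v) \<or> \<not> placed (state t v)) \<and>
    children (state (Suc t + i) v) =
      filter (\<lambda>u. (if placed (state t u) then parent (state t u) else None) = Some v) (nbrs (state t v))"
proof (induction i)
  case 0 then show ?case using state_Suc_handshake[of t v] by (simp add: t_def)
next
  case (Suc i)
  have "election_rounds N < Suc t + i" by (simp add: t_def)
  from state_Suc_after_election[OF this, of v] Suc show ?case by simp
qed

lemma depth_before_count: "r \<le> Suc (election_rounds N) \<Longrightarrow> depth (state r v) = 0"
proof (induction r)
  case 0 then show ?case by (simp add: td_init_def)
next
  case (Suc r)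
  then have IH: "depth (state r v) = 0" by simp
  from round_cases[of r v] show ?case
  proof cases
    case placed_vertex then show ?thesis using state_Suc_placed[OF placed_vertex] IH by simp
  next
    case flooding then show ?thesis using state_Suc_flood[OF flooding] IH by simp
  next
    case electing then show ?thesis using state_Suc_elect[OF electing] IH by simp
  next
    case handshake then show ?thesis using state_Suc_handshake[OF handshake] IH by simp
  qed (use Suc.prems in simp_all)
qed

lemma state_idle:
  "election_rounds N + N * (2*N) < r \<Longrightarrow> state (r + i) v = (state r v)\<lparr>clock := r + i\<rparr>"
proof (induction i)
  case 0 then show ?case by simp
next
  case (Suc i)
  have "state (Suc (r + i)) v = (state (r + i) v)\<lparr>clock := Suc (r + i)\<rparr>"
    using state_Suc_idle[of "r + i" v] Suc.prems by simp
  then show ?case using Suc by simp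
qed

definition final_level where "final_level v = level (state (election_rounds N) v)"

definition final_depth where "final_depth = Max (final_level ` V)"

lemma count_block_step:
  assumes q: "q < N" and j: "j < 2*N"
  defines "t \<equiv> Suc (election_rounds N) + q * (2*N) + j"
  shows "state (Suc t) w =
    (let b = depth_msg N (state t w) \<or> (\<exists>u. E w u \<and> depth_msg N (state t u)) in
     if Suc j = 2*N
     then (state t w)\<lparr>clock := Suc t, beacon := b, depth := (if b then Suc q else depth (state t w))\<rparr>
     else (state t w)\<lparr>clock := Suc t, beacon := b\<rparr>)"
proof -
  have "Suc q * (2*N) \<le> N * (2*N)" using q by (intro mult_le_mono1) simp
  then have round: "election_rounds N < t" "t \<le> election_rounds N + N * (2*N)" using j
    by (simp_all add: t_def)
  have i: "t - Suc (election_rounds N) = q * (2*N) + j" by (simp add: t_def)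
  have "(t - Suc (election_rounds N)) mod (2*N) = j" "(t - Suc (election_rounds N)) div (2*N) = q"
    unfolding i using j by simp_all
  then show ?thesis using state_Suc_count[OF round, of w] by (simp only: Let_def)
qed

lemma depth_msg_count_block:
  fixes q :: nat
  assumes j: "j < 2*N"
  defines "t \<equiv> Suc (election_rounds N) + q * (2*N)"
  shows "depth_msg N (state (t + j) w) =
    (if j = 0 then Suc q \<le> final_level w else beacon (state (t + j) w))"
proof -
  have "level (state (t + j) w) = final_level w"
    using state_after_election[of "q * (2*N) + j" w] by (simp add: t_def final_level_def add.assoc)
  moreover have i: "t + j - Suc (election_rounds N) = q * (2*N) + j" by (simp add: t_def)
  moreover have "(t + j - Suc (election_rounds N)) mod (2*N) = j"
    and "(t + j - Suc (election_rounds N)) div (2*N) = q"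
    unfolding i using j by simp_all
  ultimately show ?thesis by (simp only: depth_msg_def Let_def state_ident_clock)
qed

lemma depth_block_flag:
  assumes q: "q < N" and w: "w \<in> V"
    and diam: "\<forall>v\<in>V. \<forall>w\<in>V. (v,w) \<in> (Id_on V \<union> {(a,b). E a b})^^(2*N - 1)"
  defines "t \<equiv> Suc (election_rounds N) + q * (2*N)"
  shows "depth_msg N (state (t + (2*N - 1)) w) \<longleftrightarrow> Suc q \<le> final_depth"
proof -
  define x where "x j v = depth_msg N (state (t + j) v)" for j v
  define Rl where "Rl = {(a,b). E a b}"
  define c where "c v = (Suc q \<le> final_level v)" for v
  define L where "L = 2*N - 1"
  have L2: "Suc L = 2*N" using N_ge_2 by (simp add: L_def)
  have x0: "x 0 v = c v" for v using depth_msg_count_block[of 0 q v] N_ge_2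
    by (simp add: x_def c_def t_def)
  have xs: "x (Suc j) v = (x j v \<or> (\<exists>u. E v u \<and> x j u))" if "j < L" for j v
  proof -
    have "x (Suc j) v = beacon (state (Suc (t + j)) v)"
      using depth_msg_count_block[of "Suc j" q v] that L2 by (simp add: x_def t_def)
    then show ?thesis using count_block_step[OF q, of j v] that L2
      by (simp add: Let_def x_def t_def)
  qed
  have RlV: "Rl \<subseteq> V \<times> V" using edge_in_V by (auto simp: Rl_def)
  have fl: "(\<forall>w'. (w,w') \<in> (Id_on V \<union> Rl)^^L \<longrightarrow> c w' \<le> x L w) \<and>
      (\<exists>w'. (w,w') \<in> (Id_on V \<union> Rl)^^L \<and> x L w = c w')"
    by (rule max_flooding[of V x c L Rl, OF _ _ _ _ RlV _ w]) (use x0 xs in \<open>auto simp: Rl_def\<close>)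
  have "x L w \<longleftrightarrow> (\<exists>w'\<in>V. c w')"
  proof
    assume "x L w"
    then obtain w' where "(w,w') \<in> (Id_on V \<union> Rl)^^L" "c w'" using fl by auto
    moreover from this have "w' \<in> V" using relpow_Id_on_closed RlV w by metis
    ultimately show "\<exists>w'\<in>V. c w'" by blast
  next
    assume "\<exists>w'\<in>V. c w'"
    then obtain w' where "w' \<in> V" "c w'" by blast
    moreover from this have "(w,w') \<in> (Id_on V \<union> Rl)^^L" using diam w by (simp add: Rl_def L_def)
    ultimately show "x L w" using fl by auto
  qed
  also have "(\<exists>w'\<in>V. c w') \<longleftrightarrow> Suc q \<le> final_depth"
    unfolding c_def final_depth_def using finite_V V_nonempty by (subst Max_ge_iff) auto
  finally show ?thesis by (simp add: x_def L_def)
qed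

lemma depth_count_phase:
  assumes q: "q < N" and v: "v \<in> V"
    and diam: "\<forall>v\<in>V. \<forall>w\<in>V. (v,w) \<in> (Id_on V \<union> {(a,b). E a b})^^(2*N - 1)"
  shows "depth (state (Suc (election_rounds N) + Suc q * (2*N)) v) =
    (if Suc q \<le> final_depth then Suc q else depth (state (Suc (election_rounds N) + q * (2*N)) v))"
proof -
  define t where "t = Suc (election_rounds N) + q * (2*N)"
  define L where "L = 2*N - 1"
  have L2: "Suc L = 2*N" using N_ge_2 by (simp add: L_def)
  have same_depth: "depth (state (t + j) v) = depth (state t v)" if "j \<le> L" for j
    using that
  proof (induction j)
    case (Suc j)
    then show ?case using count_block_step[OF q, of j v] L2 by (simp add: Let_def t_def)
  qed simp
  have flag: "(depth_msg N (state (t + L) v) \<or> (\<exists>u. E v u \<and> depth_msg N (state (t + L) u))) \<longleftrightarrow>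
      Suc q \<le> final_depth"
    using depth_block_flag[OF q _ diam] v edge_in_V by (auto simp: t_def L_def)
  have eq: "Suc (election_rounds N) + Suc q * (2*N) = Suc (t + L)" using L2 by (simp add: t_def)
  have "depth (state (Suc (t + L)) v) = (if Suc q \<le> final_depth then Suc q else depth (state t v))"
    using count_block_step[OF q, of L v] L2 flag same_depth[of L] by (simp add: Let_def t_def)
  then show ?thesis unfolding eq t_def[symmetric] .
qed

section \<open>The elimination tree\<close>

definition final_parent where "final_parent v = parent (state (election_rounds N) v)"

lemma election_rounds_eq: "election_rounds N = N * Suc N" by (simp add: election_rounds_def)

context
  assumes inv_N: "phase_inv N" and all_placed_N: "\<forall>v\<in>V. placed (state (election_rounds N) v)"

begin

lemma tparent_final: "v \<in> V \<Longrightarrow> tparent (election_rounds N) v = final_parent v" using all_placed_N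
  by (simp add: tparent_def final_parent_def)

lemma tlevel_final: "v \<in> V \<Longrightarrow> tlevel N (election_rounds N) v = final_level v" using all_placed_N
  by (simp add: tlevel_def final_level_def)

lemma final_level_bounds: "v \<in> V \<Longrightarrow> 1 \<le> final_level v \<and> final_level v \<le> N"
  using phase_inv_levels[OF inv_N, folded election_rounds_eq] all_placed_N by (simp add: final_level_def)

lemma final_parent_None_iff: "v \<in> V \<Longrightarrow> final_parent v = None \<longleftrightarrow> final_level v = 1"
  using phase_inv_root_iff[OF inv_N, folded election_rounds_eq] tparent_final tlevel_final by simp

lemma final_parent_level: "v \<in> V \<Longrightarrow> final_parent v = Some w \<Longrightarrow> w \<in> V \<and> Suc (final_level w) =
  final_level v"
  using phase_inv_tparent[OF inv_N, folded election_rounds_eq] tparent_final tlevel_final by metis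

lemma final_parent_edge: "v \<in> V \<Longrightarrow> final_parent v = Some w \<Longrightarrow> E v w"
  using phase_inv_parent_edge[OF inv_N, folded election_rounds_eq] all_placed_N by (simp add: final_parent_def)

lemma parent_rel_tparent_final: "parent_rel V (tparent (election_rounds N)) =
  parent_rel V final_parent"
  using tparent_final by (auto simp: parent_rel_def)

lemma final_parent_ancestor: "E u v \<Longrightarrow> ancestor V final_parent u v \<or> ancestor V final_parent v u"
proof -
  assume uv: "E u v"
  then have "placed (state (election_rounds N) u)" using all_placed_N edge_in_V by blast
  then show ?thesis using phase_inv_edge_ancestor[OF inv_N, folded election_rounds_eq] uv
    unfolding ancestor_def parent_rel_tparent_final by blast
qed

lemma final_root_unique: "\<exists>!x. x \<in> V \<and> final_parent x = None"
proof -
  have "\<exists>!x. x \<in> V \<and> tparent (election_rounds N) x = None"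
    using phase_inv_unique_root[OF inv_N, folded election_rounds_eq] N_ge_2 by simp
  moreover have "x \<in> V \<and> tparent (election_rounds N) x = None \<longleftrightarrow> x \<in> V \<and> final_parent x = None" for x
    using tparent_final by auto
  ultimately show ?thesis by simp
qed

definition root where "root = (THE x. x \<in> V \<and> final_parent x = None)"

lemma root_in_V: "root \<in> V" and final_parent_root: "final_parent root = None"
  and root_unique: "x \<in> V \<Longrightarrow> final_parent x = None \<Longrightarrow> x = root"
  using theI'[OF final_root_unique] final_root_unique unfolding root_def by blast+

lemma final_parent_to_root: "v \<in> V \<Longrightarrow> final_level v = Suc h \<Longrightarrow>
  (v, root) \<in> (parent_rel V final_parent)^^h"
proof (induction h arbitrary: v)
  case 0
  then have "final_parent v = None" using final_parent_None_iff by simp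
  then show ?case using root_unique[of v] 0 by simp
next
  case (Suc h)
  then have "final_parent v \<noteq> None" using final_parent_None_iff by simp
  then obtain w where w: "final_parent v = Some w" by blast
  then have w2: "w \<in> V" "final_level w = Suc h"
    using final_parent_level[OF Suc.prems(1) w] Suc.prems by auto
  have "(v,w) \<in> parent_rel V final_parent" using w Suc.prems by (simp add: parent_rel_def)
  then show ?case using Suc.IH[OF w2] by (rule relpow_Suc_I2)
qed

lemma final_ancestor_level_le: "(u,w) \<in> (parent_rel V final_parent)\<^sup>* \<Longrightarrow> u \<in> V \<Longrightarrow> w \<in> V \<and>
  final_level w \<le> final_level u"
proof (induction rule: rtrancl_induct)
  case (step y z)
  then have "y \<in> V" "final_parent y = Some z" by (auto simp: parent_rel_def)
  then show ?case using final_parent_level step by fastforce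
qed simp

lemma card_final_ancestors: "v \<in> V \<Longrightarrow> final_level v = h \<Longrightarrow>
  card {w. (v,w) \<in> (parent_rel V final_parent)\<^sup>*} = h"
proof (induction h arbitrary: v rule: less_induct)
  case (less h)
  let ?PR = "parent_rel V final_parent"
  have split: "{w. (v,w) \<in> ?PR\<^sup>*} = insert v {w. \<exists>u. (v,u) \<in> ?PR \<and> (u,w) \<in> ?PR\<^sup>*}"
    by (auto elim: converse_rtranclE intro: converse_rtrancl_into_rtrancl)
  show ?case
  proof (cases "final_parent v")
    case None
    then have "{w. \<exists>u. (v,u) \<in> ?PR \<and> (u,w) \<in> ?PR\<^sup>*} = {}" by (auto simp: parent_rel_def)
    then have "{w. (v,w) \<in> ?PR\<^sup>*} = {v}" unfolding split by (simp only:)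
    then show ?thesis using final_parent_None_iff less.prems None by simp
  next
    case (Some u)
    have u: "u \<in> V" "Suc (final_level u) = final_level v"
      using final_parent_level[OF less.prems(1) Some] by auto
    have eq: "{w. \<exists>u'. (v,u') \<in> ?PR \<and> (u',w) \<in> ?PR\<^sup>*} = {w. (u,w) \<in> ?PR\<^sup>*}"
      using Some less.prems by (auto simp: parent_rel_def)
    have fin: "finite {w. (u,w) \<in> ?PR\<^sup>*}"
      using final_ancestor_level_le[OF _ u(1)] finite_V
        by (metis (no_types, lifting) mem_Collect_eq rev_finite_subset subsetI)
    have nv: "v \<notin> {w. (u,w) \<in> ?PR\<^sup>*}" using final_ancestor_level_le[OF _ u(1)] u by fastforce
    have "card {w. (u,w) \<in> ?PR\<^sup>*} = final_level u" using less.IH[of "final_level u" u] u less.prems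
      by simp
    then show ?thesis using split eq fin nv u less.prems by simp
  qed
qed

lemma final_parent_elimination_tree: "elimination_tree V E final_parent"
  unfolding elimination_tree_def elimination_forest_def rooted_forest_def
proof (intro conjI ballI allI impI)
  fix v w assume "v \<in> V" "final_parent v = Some w" then show "w \<in> V" using final_parent_level
    by blast
next
  fix v assume v: "v \<in> V"
  obtain h where "final_level v = Suc h" using final_level_bounds[OF v]
    by (metis Suc_pred' less_eq_Suc_le One_nat_def)
  then have "(v, root) \<in> (parent_rel V final_parent)^^h" using final_parent_to_root v by blast
  then have "(v, root) \<in> (parent_rel V final_parent)\<^sup>*" using relpow_imp_rtrancl by blast
  then show "\<exists>r\<in>V. final_parent r = None \<and> (v, r) \<in> (parent_rel V final_parent)\<^sup>*"
    using root_in_V final_parent_root by blast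
next
  fix u v assume "E u v" then show "ancestor V final_parent u v \<or> ancestor V final_parent v u"
    by (rule final_parent_ancestor)
next
  show "\<exists>!r. r \<in> V \<and> final_parent r = None" using final_root_unique .
qed

lemma forest_depth_final_parent: "forest_depth V final_parent = final_depth"
  unfolding forest_depth_def final_depth_def using card_final_ancestors
    by (intro arg_cong[where f=Max] image_cong) auto

lemma final_depth_bounds: "1 \<le> final_depth \<and> final_depth \<le> N"
proof -
  have fin: "finite (final_level ` V)" "final_level ` V \<noteq> {}" using finite_V V_nonempty by auto
  obtain v where v: "v \<in> V" using V_nonempty by blast
  have "1 \<le> final_depth" unfolding final_depth_def using final_level_bounds[OF v] fin v
    by (meson Max_ge image_eqI order_trans)
  moreover have "final_depth \<le> N" unfolding final_depth_def using final_level_bounds fin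
    by (subst Max_le_iff) auto
  ultimately show ?thesis by simp
qed

lemma walks_within_2N: "\<forall>v\<in>V. \<forall>w\<in>V. (v,w) \<in> (Id_on V \<union> {(a,b). E a b})^^(2*N - 1)"
proof (intro ballI)
  fix v w assume v: "v \<in> V" and w: "w \<in> V"
  define X where "X = Id_on V \<union> {(a,b). E a b}"
  have sub: "parent_rel V final_parent \<subseteq> X" using final_parent_edge
    by (auto simp: parent_rel_def X_def)
  obtain a where a: "final_level v = Suc a" using final_level_bounds[OF v]
    by (metis Suc_pred' less_eq_Suc_le One_nat_def)
  obtain b where b: "final_level w = Suc b" using final_level_bounds[OF w]
    by (metis Suc_pred' less_eq_Suc_le One_nat_def)
  have va: "(v, root) \<in> X^^a" using final_parent_to_root[OF v a] relpow_mono[OF sub] by blast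
  have wb: "(w, root) \<in> X^^b" using final_parent_to_root[OF w b] relpow_mono[OF sub] by blast
  have symX: "\<forall>x y. (x,y) \<in> X \<longrightarrow> (y,x) \<in> X" using edge_in_V by (auto simp: X_def)
  have "(root, w) \<in> X^^b" using relpow_sym[OF symX wb] .
  then have "(v, w) \<in> X^^(a + b)" using va by (auto simp: relpow_add)
  moreover have "(w,w) \<in> X" using w unfolding X_def by blast
  ultimately have p: "(v, w) \<in> X^^(a + b + (2*N - 1 - (a + b)))" by (rule relpow_pad_loop)
  have "a + b \<le> 2*N - 1" using final_level_bounds[OF v] final_level_bounds[OF w] a b by simp
  then have eq: "a + b + (2*N - 1 - (a + b)) = 2*N - 1" by simp
  show "(v,w) \<in> (Id_on V \<union> {(a,b). E a b})^^(2*N - 1)" using p unfolding eq X_def .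
qed

lemma depth_final: "q \<le> N \<Longrightarrow> v \<in> V \<Longrightarrow> depth (state (Suc (election_rounds N) + q * (2*N)) v) =
  min q final_depth"
proof (induction q)
  case 0 then show ?case using depth_before_count by simp
next
  case (Suc q)
  then have "depth (state (Suc (election_rounds N) + Suc q * (2*N)) v) =
    (if Suc q \<le> final_depth then Suc q else min q final_depth)"
    using depth_count_phase[of q v] walks_within_2N by simp
  then show ?case by simp
qed

lemma outputs_tree:
  assumes R: "Suc (election_rounds N) + N * (2*N) \<le> R" and nr: "\<forall>v\<in>V. \<not> rejected (state R v)"
  shows "\<exists>par. elimination_tree V E par \<and> forest_depth V par \<le> N \<and>
    (\<forall>v\<in>V. td_out (state R v) = TreeInfo (par v) {u\<in>V. par u = Some v} (forest_depth V par))"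
proof (intro exI conjI ballI)
  show "elimination_tree V E final_parent" by (rule final_parent_elimination_tree)
  show "forest_depth V final_parent \<le> N" using forest_depth_final_parent final_depth_bounds by simp
  fix v assume v: "v \<in> V"
  define tN where "tN = Suc (election_rounds N) + N * (2*N)"
  have SR: "state R v = (state tN v)\<lparr>clock := R\<rparr>"
  proof (cases "R = tN")
    case True then show ?thesis by simp
  next
    case False
    then have "election_rounds N + N * (2*N) < tN" "R = tN + (R - tN)" using R
      by (simp_all add: tN_def)
    from state_idle[OF this(1), of "R - tN" v] this(2) show ?thesis by simp
  qed
  have pst: "parent (state tN v) = final_parent v"
    "children (state tN v) = filter (\<lambda>u. (if placed (state (election_rounds N) u)
       then parent (state (election_rounds N) u) else None) = Some v) (nbrs (state (election_rounds N) v))"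
    using state_after_election[of "N * (2*N)" v] by (simp_all add: tN_def final_parent_def)
  have dpv: "depth (state tN v) = final_depth" using depth_final[of N v] v final_depth_bounds
    by (simp add: tN_def)
  have "set (children (state tN v)) = {u. E v u \<and> final_parent u = Some v}"
    using pst(2) all_placed_N edge_in_V by (auto simp: final_parent_def)
  also have "\<dots> = {u\<in>V. final_parent u = Some v}" using final_parent_edge edge_in_V by blast
  finally have kds: "set (children (state tN v)) = {u\<in>V. final_parent u = Some v}" .
  have "\<not> rejected (state R v)" using nr v by blast
  then show "td_out (state R v) =
    TreeInfo (final_parent v) {u\<in>V. final_parent u = Some v} (forest_depth V final_parent)"
    using SR pst kds dpv forest_depth_final_parent by (simp add: td_out_def)
qed

end

lemma no_reject_outputs_tree:
  assumes R: "Suc (election_rounds N) + N * (2*N) \<le> R" and nr: "\<forall>v\<in>V. \<not> rejected (state R v)"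
  shows "\<exists>par. elimination_tree V E par \<and> forest_depth V par \<le> N \<and>
    (\<forall>v\<in>V. td_out (state R v) = TreeInfo (par v) {u\<in>V. par u = Some v} (forest_depth V par))"
proof -
  have nrr: "\<not> rejected (state r v)" if "r \<le> R" "v \<in> V" for r v
    using rejected_mono[OF that(1)] nr that(2) by blast
  have "phase_agreed k" if "k < N" for k
  proof (rule no_reject_agreed[OF that])
    have "Suc k * Suc N \<le> N * Suc N" using that by (intro mult_le_mono1) simp
    then have "Suc k * Suc N \<le> R" using R by (simp add: election_rounds_def)
    then show "\<forall>v\<in>V. \<not> rejected (state (Suc k * Suc N) v)" using nrr by blast
  qed
  then have inv_N: "phase_inv N" using phase_inv_upto by blast
  have all_placed_N: "\<forall>v\<in>V. placed (state (election_rounds N) v)"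
  proof
    fix v assume v: "v \<in> V"
    have "\<not> rejected (state (Suc (election_rounds N) + 0) v)"
      using nrr[of "Suc (election_rounds N) + 0" v] R v by simp
    then show "placed (state (election_rounds N) v)" using state_after_election[of 0 v] by simp
  qed
  show ?thesis using outputs_tree[OF inv_N all_placed_N R nr] .
qed

lemma short_walks_no_reject:
  assumes sh: short_walks and R: "Suc (election_rounds N) + N * (2*N) \<le> R"
  shows "\<forall>v\<in>V. \<not> rejected (state R v)"
proof
  fix v assume v: "v \<in> V"
  have allG: "\<forall>k<N. phase_inv k \<longrightarrow> phase_agreed k" using short_walks_agreed[OF sh] by blast
  have inv_N: "phase_inv N" using phase_inv_upto[OF allG] by simp
  have rk: "k \<le> N \<Longrightarrow> \<not> rejected (state (k * Suc N) v)" for k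
  proof (induction k)
    case 0 then show ?case by (simp add: td_init_def)
  next
    case (Suc k)
    then have "phase_agreed k" using allG phase_inv_upto[OF allG] by simp
    then show ?case using agreed_rejected_unchanged[of k v] Suc v by simp
  qed
  have all_placed_N: "\<forall>v\<in>V. placed (state (election_rounds N) v)" using all_placed[OF sh inv_N]
    by (simp add: election_rounds_def)
  have "\<not> rejected (state (election_rounds N) v)" using rk[of N] by (simp add: election_rounds_def)
  then have "\<not> rejected (state (Suc (election_rounds N) + (R - Suc (election_rounds N))) v)"
    using state_after_election[of "R - Suc (election_rounds N)" v] all_placed_N v by simp
  moreover have "Suc (election_rounds N) + (R - Suc (election_rounds N)) = R" using R by simp
  ultimately show "\<not> rejected (state R v)" by simp
qed

lemma td_run_correct:
  assumes R: "Suc (election_rounds N) + N * (2*N) \<le> R"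
  shows "(\<exists>par. elimination_tree V E par \<and> forest_depth V par \<le> N \<and>
      (\<forall>v\<in>V. td_out (state R v) = TreeInfo (par v) {u\<in>V. par u = Some v} (forest_depth V par)))
    \<or> ((\<exists>v\<in>V. td_out (state R v) = Reject) \<and> \<not> short_walks)"
proof (cases "\<forall>v\<in>V. \<not> rejected (state R v)")
  case True then show ?thesis using no_reject_outputs_tree[OF R] by blast
next
  case False
  then obtain v where "v \<in> V" "rejected (state R v)" by blast
  then show ?thesis using short_walks_no_reject[OF _ R] by (auto simp: td_out_def)
qed

end

lemma td_algorithm_correct:
  assumes d: "1 \<le> d" and G: "connected_graph V E" and ids: "V \<subseteq> {..< (max 2 (card V)) ^ c}"
  shows "let R = 5 * 2 ^ (2 * d);
             st = run congest_init (congest_send d) (congest_step d) E;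
             res = (\<lambda>v. congest_out (st R v))
         in
         (\<forall>r < R. \<forall>u v. E u v \<longrightarrow>
             length (congest_send d (st r u) v) \<le> (c + 1) * log_bits (card V)) \<and>
         ((\<exists>par. elimination_tree V E par \<and> forest_depth V par \<le> 2 ^ d \<and>
             (\<forall>v\<in>V. res v = TreeInfo (par v) {u\<in>V. par u = Some v}
                                        (forest_depth V par)))
          \<or> ((\<exists>v\<in>V. res v = Reject) \<and> treedepth V E > d))"
proof -
  define N where "N = (2::nat) ^ d"
  have "(2::nat) ^ 1 \<le> 2 ^ d" using d by (rule power_increasing) simp
  then have N_ge_2: "2 \<le> N" by (simp add: N_def)
  interpret td_run V E N using G N_ge_2 by unfold_locales
  define R where "R = 5 * N * N"
  have R_eq: "5 * 2 ^ (2 * d) = R" unfolding R_def N_def by (simp add: mult_2 power_add)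
  have "1 * (N * 2) \<le> N * (N * 2)" using N_ge_2 by (intro mult_le_mono1) simp
  then have R_ge: "Suc (election_rounds N) + N * (2*N) \<le> R"
    using N_ge_2 by (simp add: R_def election_rounds_def algebra_simps)
  have td: "d < treedepth V E" if "\<not> short_walks"
  proof (rule ccontr)
    assume "\<not> d < treedepth V E"
    then have "treedepth V E \<le> d" by simp
    then have "short_walks" unfolding short_walks_def using treedepth_walk_length_less[OF G]
      by (simp add: N_def)
    with that show False ..
  qed
  show ?thesis
    unfolding Let_def R_eq run_congest congest_send_def congest_out_def decode_encode_state
      N_def[symmetric]
    using td_send_length[OF ids] td_run_correct[OF R_ge] td by (auto simp: N_def)
qed

theorem mainTheorem5:
  "\<forall>c::nat. \<exists>B K::nat. \<forall>d::nat. d \<ge> 1 \<longrightarrow>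
     (\<exists>(init :: nat \<Rightarrow> nat set \<Rightarrow> nat list)
        (send :: nat list \<Rightarrow> nat \<Rightarrow> bool list)
        (step :: nat list \<Rightarrow> (nat \<Rightarrow> bool list) \<Rightarrow> nat list)
        (out :: nat list \<Rightarrow> td_output).
      \<forall>(V :: nat set) (E :: nat \<Rightarrow> nat \<Rightarrow> bool).
        connected_graph V E \<and> V \<subseteq> {..< (max 2 (card V)) ^ c} \<longrightarrow>
        (let R = K * 2 ^ (2 * d);
             st = run init send step E;
             res = (\<lambda>v. out (st R v))
         in
         (\<forall>r < R. \<forall>u v. E u v \<longrightarrow>
             length (send (st r u) v) \<le> B * log_bits (card V)) \<and>
         ((\<exists>par. elimination_tree V E par \<and> forest_depth V par \<le> 2 ^ d \<and>
             (\<forall>v\<in>V. res v = TreeInfo (par v) {u\<in>V. par u = Some v}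
                                        (forest_depth V par)))
          \<or> ((\<exists>v\<in>V. res v = Reject) \<and> treedepth V E > d))))"
  using td_algorithm_correct by blast

end
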